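(* Let $\widehat g\in\widehat{\mathcal L}$ with leading term $ax^\alpha\boldsymbol\ell^m$, $a>0$, $\alpha>0$, $m\in\mathbb Z$, and let $\widehat g_{\alpha,m}(x)=ax^\alpha\boldsymbol\ell^m$. Then $\widehat\varphi:=\widehat g_{\alpha,m}^{-1}\circ\widehat g$ (so that $\widehat g=\widehat g_{\alpha,m}\circ\widehat\varphi$) is parabolic and belongs to $\widehat{\mathcal L}_2$, and to $\widehat{\mathcal L}$ if $m=0$. Moreover $\mathcal S(\widehat\varphi-\mathrm{id})\subseteq\mathcal R_{\widehat g}$, where $\mathcal R_{\widehat g}=\widetilde{\mathcal R}_{\widehat g}+(1,0,0)$ if $m\neq0$ and $\mathcal R_{\widehat g}=\widetilde{\mathcal R}_{\widehat g}+(1,0)$ if $m=0$.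
   Context: $\boldsymbol\ell(x)=-1/\log x$, $\boldsymbol\ell_2=\boldsymbol\ell\circ\boldsymbol\ell$. $\widehat{\mathcal L}_j$, $\widehat{\mathcal L}$: power–iterated-logarithm transseries $\sum a\,x^{\gamma_0}\boldsymbol\ell^{\gamma_1}\cdots\boldsymbol\ell_j^{\gamma_j}$ with well-ordered nested exponent sequences (each finite or strictly increasing to $+\infty$) and positive $x$-exponents; $\widehat{\mathcal L}\subset\widehat{\mathcal L}_1$ has integer $\boldsymbol\ell$-exponents. Parabolic means leading term $x$. The support $\mathcal S(\cdot)$ is the set of exponent tuples of monomials with nonzero coefficient. $\widetilde{\mathcal R}_{\widehat g}$ is the additive sub-semigroup generated by: if $m\ne0$, $(\beta-\alpha,l-m,0)$ for $(\beta,l)\in\mathcal S(\widehat g)\setminus\{(\alpha,m)\}$, $(0,1,-1)$ and $(0,0,1)$; if $m=0$, $(\beta-\alpha,l)$ for $(\beta,l)\in\mathcal S(\widehat g)\setminus\{(\alpha,0)\}$ and $(0,1)$. *)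

theory Defs
  imports Complex_Main
begin

text \<open>Formal power--iterated-logarithm transseries, represented by their coefficient maps.
  A monomial x^g0 * l^g1 * l2^g2 (l = -1/log x, l2 = l o l, x -> 0+) is encoded by the
  exponent triple (g0, g1, g2).  A monomial with lexicographically larger exponent triple is
  smaller (as x -> 0+), so leading terms are lexicographic minima of the support.\<close>

type_synonym mon = "real \<times> real \<times> real"
type_synonym ts = "mon \<Rightarrow> real"

definition add_mon :: "mon \<Rightarrow> mon \<Rightarrow> mon" where
  "add_mon p q = (fst p + fst q, fst (snd p) + fst (snd q), snd (snd p) + snd (snd q))"

definition add2 :: "real \<times> real \<Rightarrow> real \<times> real \<Rightarrow> real \<times> real" where
  "add2 p q = (fst p + fst q, snd p + snd q)"

definition lexless :: "mon \<Rightarrow> mon \<Rightarrow> bool" where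
  "lexless p q \<longleftrightarrow> fst p < fst q \<or>
     (fst p = fst q \<and> (fst (snd p) < fst (snd q) \<or>
        (fst (snd p) = fst (snd q) \<and> snd (snd p) < snd (snd q))))"

definition lexle :: "mon \<Rightarrow> mon \<Rightarrow> bool" where
  "lexle p q \<longleftrightarrow> p = q \<or> lexless p q"

definition supp :: "ts \<Rightarrow> mon set" where
  "supp f = {p. f p \<noteq> 0}"

definition well_ordered_mon :: "mon set \<Rightarrow> bool" where
  "well_ordered_mon A \<longleftrightarrow> (\<forall>B \<subseteq> A. B \<noteq> {} \<longrightarrow> (\<exists>b\<in>B. \<forall>c\<in>B. lexle b c))"

definition hahn :: "ts \<Rightarrow> bool" where
  "hahn f \<longleftrightarrow> well_ordered_mon (supp f)"

definition ts_mono :: "real \<Rightarrow> mon \<Rightarrow> ts" where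
  "ts_mono c q = (\<lambda>p. if p = q then c else 0)"

definition ts_one :: ts where
  "ts_one = ts_mono 1 (0, 0, 0)"

definition ts_minus :: "ts \<Rightarrow> ts \<Rightarrow> ts" where
  "ts_minus f g = (\<lambda>p. f p - g p)"

definition ts_scale :: "real \<Rightarrow> ts \<Rightarrow> ts" where
  "ts_scale c f = (\<lambda>p. c * f p)"

definition ts_mult :: "ts \<Rightarrow> ts \<Rightarrow> ts" where
  "ts_mult f g = (\<lambda>r. \<Sum>(p, q) \<in> {(p, q). p \<in> supp f \<and> q \<in> supp g \<and> add_mon p q = r}.
                        f p * g q)"

primrec ts_pow :: "ts \<Rightarrow> nat \<Rightarrow> ts" where
  "ts_pow f 0 = ts_one"
| "ts_pow f (Suc n) = ts_mult f (ts_pow f n)"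

text \<open>Substitution of an infinitesimal into a formal power series \<open>\<Sum> c n * X^n\<close>
  (the family of powers of an infinitesimal Hahn series is summable).\<close>
definition ts_psubst :: "(nat \<Rightarrow> real) \<Rightarrow> ts \<Rightarrow> ts" where
  "ts_psubst c e = (\<lambda>r. \<Sum>n \<in> {n. ts_pow e n r \<noteq> 0}. c n * ts_pow e n r)"

definition ts_binom :: "real \<Rightarrow> ts \<Rightarrow> ts" where
  "ts_binom r e = ts_psubst (\<lambda>n. r gchoose n) e"

definition ts_log1p :: "ts \<Rightarrow> ts" where
  "ts_log1p e = ts_psubst (\<lambda>n. if n = 0 then 0 else (-1) ^ (n + 1) / real n) e"

definition parabolic :: "ts \<Rightarrow> bool" where
  "parabolic f \<longleftrightarrow> hahn f \<and> f (1, 0, 0) = 1 \<and> (\<forall>p \<in> supp f. lexle (1, 0, 0) p)"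

definition ts_eps :: "ts \<Rightarrow> ts" where
  "ts_eps f = (\<lambda>p. f (add_mon p (1, 0, 0)) - ts_one p)"

text \<open>Formal composition \<open>g_{\<alpha>,m} \<circ> \<phi>\<close> with \<open>g_{\<alpha>,m}(x) = a x^\<alpha> l^m\<close>:
  for \<open>\<phi> = x (1 + e)\<close>, \<open>\<phi>^\<alpha> = x^\<alpha> (1+e)^\<alpha>\<close> and
  \<open>l(\<phi>) = l / (1 - l log(1+e))\<close>, so
  \<open>g_{\<alpha>,m} \<circ> \<phi> = a x^\<alpha> l^m (1+e)^\<alpha> (1 + u)^(-m)\<close> with \<open>u = - l log(1+e)\<close>.\<close>
definition comp_gam :: "real \<Rightarrow> real \<Rightarrow> int \<Rightarrow> ts \<Rightarrow> ts" where
  "comp_gam a \<alpha> m \<phi> =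
     (let e = ts_eps \<phi>;
          u = ts_scale (-1) (ts_mult (ts_mono 1 (0, 1, 0)) (ts_log1p e))
      in ts_scale a (ts_mult (ts_mono 1 (\<alpha>, real_of_int m, 0))
                       (ts_mult (ts_binom \<alpha> e) (ts_binom (- real_of_int m) u))))"

text \<open>A real exponent set is "finite or a strictly increasing sequence tending to +infinity".\<close>
definition loc_fin :: "real set \<Rightarrow> bool" where
  "loc_fin A \<longleftrightarrow> (\<forall>c. finite {x \<in> A. x \<le> c})"

definition in_L2 :: "ts \<Rightarrow> bool" where
  "in_L2 f \<longleftrightarrow> (\<forall>p \<in> supp f. fst p > 0)
     \<and> loc_fin {g0. \<exists>g1 g2. (g0, g1, g2) \<in> supp f}
     \<and> (\<forall>g0. loc_fin {g1. \<exists>g2. (g0, g1, g2) \<in> supp f})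
     \<and> (\<forall>g0 g1. loc_fin {g2. (g0, g1, g2) \<in> supp f})"

definition in_L1 :: "ts \<Rightarrow> bool" where
  "in_L1 f \<longleftrightarrow> in_L2 f \<and> (\<forall>p \<in> supp f. snd (snd p) = 0)"

definition in_L :: "ts \<Rightarrow> bool" where
  "in_L f \<longleftrightarrow> in_L1 f \<and> (\<forall>p \<in> supp f. fst (snd p) \<in> \<int>)"

inductive_set sgrp :: "('a \<Rightarrow> 'a \<Rightarrow> 'a) \<Rightarrow> 'a set \<Rightarrow> 'a set" for pl G where
  gen: "x \<in> G \<Longrightarrow> x \<in> sgrp pl G"
| add: "x \<in> sgrp pl G \<Longrightarrow> y \<in> sgrp pl G \<Longrightarrow> pl x y \<in> sgrp pl G"

definition gens3 :: "ts \<Rightarrow> real \<Rightarrow> int \<Rightarrow> mon set" where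
  "gens3 g \<alpha> m = {(\<beta> - \<alpha>, l - real_of_int m, 0) | \<beta> l.
                     (\<beta>, l, 0) \<in> supp g \<and> (\<beta>, l) \<noteq> (\<alpha>, real_of_int m)}
                  \<union> {(0, 1, -1), (0, 0, 1)}"

definition gens2 :: "ts \<Rightarrow> real \<Rightarrow> (real \<times> real) set" where
  "gens2 g \<alpha> = {(\<beta> - \<alpha>, l) | \<beta> l. (\<beta>, l, 0) \<in> supp g \<and> (\<beta>, l) \<noteq> (\<alpha>, 0)}
                \<union> {(0, 1)}"

text \<open>\<open>R_g\<close>; in the case m = 0 pairs (r0, r1) are identified with triples (r0, r1, 0).\<close>
definition R_set :: "ts \<Rightarrow> real \<Rightarrow> int \<Rightarrow> mon set" where
  "R_set g \<alpha> m =
     (if m \<noteq> 0 then {add_mon r (1, 0, 0) | r. r \<in> sgrp add_mon (gens3 g \<alpha> m)}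
      else {(r0 + 1, r1, 0) | r0 r1. (r0, r1) \<in> sgrp add2 (gens2 g \<alpha>)})"

end

theory Submission
  imports Defs "HOL-Library.Product_Lexorder" "HOL-Library.Product_Plus"
begin

text \<open>
  Write \<open>\<phi> = x (1 + e)\<close>. Since \<open>\<ell> \<circ> \<phi> = \<ell> / (1 - \<ell> log (1 + e))\<close>, the equation
  \<open>g\<^sub>\<alpha>\<^sub>,\<^sub>m \<circ> \<phi> = g\<close> says \<open>(1 + e)\<^sup>\<alpha> (1 - \<ell> log (1 + e))\<^sup>-\<^sup>m = h\<close>, where \<open>h\<close> is \<open>g\<close> divided by
  its leading term \<open>a x\<^sup>\<alpha> \<ell>\<^sup>m\<close>. For infinitesimal \<open>e\<close>, the coefficient of the left-hand side at
  a monomial \<open>r\<close> is \<open>\<alpha> e\<^sub>r\<close> plus a polynomial in the coefficients of \<open>e\<close> below \<open>r\<close>.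
  So the equation can be solved coefficient by coefficient, by well-founded recursion over any
  semigroup \<open>M\<close> of positive exponents which contains the support of \<open>h - 1\<close> and the exponent of
  \<open>\<ell>\<close>, is well ordered, and in which every exponent has only finitely many decompositions; and
  every well-ordered solution \<open>e\<close> is supported in \<open>M\<close>, since at its least exponent outside \<open>M\<close>
  the coefficient of the left-hand side would be \<open>\<alpha>\<close> times a nonzero coefficient of \<open>e\<close>.
  For \<open>M\<close> we take the semigroup generated by \<open>R~\<^sub>g\<close>; the local finiteness of its exponents
  gives these properties, and \<open>\<phi> \<in> L\<^sub>2\<close>, and \<open>supp (\<phi> - x) = x \<cdot> supp e \<subseteq> R\<^sub>g\<close>.
\<close>

declare split_paired_Ex [simp del] split_paired_All [simp del]
  \<comment> \<open>otherwise automation splits every quantified monomial into three reals\<close>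

lemma mon_add_right_mono: "(x::mon) \<le> y \<Longrightarrow> x + z \<le> y + z"
  by (cases x; cases y; cases z) auto

lemma mon_add_right_strict_mono: "(x::mon) < y \<Longrightarrow> x + z < y + z"
  by (cases x; cases y; cases z) auto

lemma mon_le_add: "0 \<le> (q::mon) \<Longrightarrow> p \<le> p + q"
  using mon_add_right_mono[of 0 q p] by (simp add: add.commute)

lemma mon_less_add: "0 < (q::mon) \<Longrightarrow> p < p + q"
  using mon_add_right_strict_mono[of 0 q p] by (simp add: add.commute)

lemma mon_summands_le: "0 \<le> (p::mon) \<Longrightarrow> 0 \<le> q \<Longrightarrow> p \<le> p + q \<and> q \<le> p + q"
  using mon_le_add[of q p] mon_le_add[of p q] by (simp add: add.commute)

lemma mon_summands_less: "0 < (p::mon) \<Longrightarrow> 0 < q \<Longrightarrow> p < p + q \<and> q < p + q"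
  using mon_less_add[of q p] mon_less_add[of p q] by (simp add: add.commute)

lemma mon_add_pos_nonneg: "0 < (x::mon) \<Longrightarrow> 0 \<le> y \<Longrightarrow> 0 < x + y"
  using mon_le_add[of y x] by (simp add: add.commute)

lemma add_mon_eq_plus: "add_mon p q = p + q"
  by (cases p; cases q) (auto simp: add_mon_def)

lemma lexless_iff_less: "lexless p q \<longleftrightarrow> p < q"
  by (cases p; cases q) (auto simp: lexless_def)

lemma lexle_iff_le: "lexle p q \<longleftrightarrow> p \<le> q"
  by (auto simp: lexle_def lexless_iff_less)

lemma well_ordered_mon_iff:
  "well_ordered_mon A \<longleftrightarrow> (\<forall>B\<subseteq>A. B \<noteq> {} \<longrightarrow> (\<exists>b\<in>B. \<forall>c\<in>B. b \<le> c))"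
  unfolding well_ordered_mon_def lexle_iff_le by (rule refl)

lemma well_ordered_mon_subset: "well_ordered_mon A \<Longrightarrow> B \<subseteq> A \<Longrightarrow> well_ordered_mon B"
  unfolding well_ordered_mon_def by (meson subset_trans)

lemma well_ordered_mon_translate:
  assumes "well_ordered_mon A"
  shows "well_ordered_mon ((\<lambda>x. x + t) ` A)"
  unfolding well_ordered_mon_iff
proof (intro allI impI)
  fix B assume B: "B \<subseteq> (\<lambda>x. x + t) ` A" "B \<noteq> {}"
  then have "(\<lambda>x. x - t) ` B \<subseteq> A" "(\<lambda>x. x - t) ` B \<noteq> {}" by auto
  then obtain b' where "b' \<in> (\<lambda>x. x - t) ` B" "\<forall>c\<in>(\<lambda>x. x - t) ` B. b' \<le> c"
    using assms unfolding well_ordered_mon_iff by blast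
  then obtain b where "b \<in> B" "\<forall>c\<in>B. b - t \<le> c - t" by blast
  then show "\<exists>b\<in>B. \<forall>c\<in>B. b \<le> c"
    using mon_add_right_mono[of "b - t" _ t] by (metis diff_add_cancel)
qed

fun nsums :: "'a::comm_monoid_add set \<Rightarrow> nat \<Rightarrow> 'a set" where
  "nsums A 0 = {0}"
| "nsums A (Suc n) = {p + q | p q. p \<in> A \<and> q \<in> nsums A n}"

lemma nsums_pos:
  fixes A :: "mon set"
  assumes "\<And>a. a \<in> A \<Longrightarrow> 0 < a" "x \<in> nsums A (Suc n)"
  shows "0 < x"
  using assms(2)
proof (induction n arbitrary: x)
  case 0 then show ?case using assms(1) by auto
next
  case (Suc n)
  then obtain p q where "x = p + q" "p \<in> A" "q \<in> nsums A (Suc n)"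
    by (simp only: nsums.simps mem_Collect_eq) blast
  then show ?case using Suc.IH assms(1) by (simp add: mon_add_pos_nonneg less_imp_le)
qed

lemma nsums_nonneg:
  fixes A :: "mon set"
  assumes "\<And>a. a \<in> A \<Longrightarrow> 0 < a" "x \<in> nsums A n"
  shows "0 \<le> x"
proof (cases n)
  case 0 then show ?thesis using assms(2) by simp
next
  case (Suc k) then show ?thesis using nsums_pos[OF assms(1)] assms(2) less_imp_le by blast
qed

lemma nsums_mono: "A \<subseteq> B \<Longrightarrow> nsums A n \<subseteq> nsums B n"
  by (induction n) auto

lemma nsums_mono_count: "(0::'a::comm_monoid_add) \<in> T \<Longrightarrow> i \<le> j \<Longrightarrow> nsums T i \<subseteq> nsums T j"
proof (induction j)
  case 0 then show ?case by simp
next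
  case (Suc j)
  show ?case
  proof (cases "i = Suc j")
    case True then show ?thesis by simp
  next
    case False
    then have "nsums T i \<subseteq> nsums T j" using Suc by simp
    moreover have "nsums T j \<subseteq> nsums T (Suc j)"
    proof
      fix x assume "x \<in> nsums T j"
      then have "x = 0 + x" by simp
      then show "x \<in> nsums T (Suc j)" unfolding nsums.simps mem_Collect_eq
        using \<open>x \<in> nsums T j\<close> Suc.prems(1) by blast
    qed
    ultimately show ?thesis by blast
  qed
qed

lemma nsums_add: "x \<in> nsums T i \<Longrightarrow> y \<in> nsums T j \<Longrightarrow> (x::'a::comm_monoid_add) + y \<in> nsums T (i + j)"
proof (induction i arbitrary: x)
  case 0 then show ?case by simp
next
  case (Suc i)
  then obtain p q where "x = p + q" "p \<in> T" "q \<in> nsums T i" by auto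
  then have "q + y \<in> nsums T (i + j)" using Suc.IH Suc.prems(2) by blast
  then show ?case unfolding add_Suc nsums.simps mem_Collect_eq using \<open>x = p + q\<close> \<open>p \<in> T\<close>
    by (intro exI[of _ p] exI[of _ "q + y"]) (simp add: add.assoc)
qed

lemma finite_nsums_of_finite: "finite T \<Longrightarrow> finite (nsums (T::'a::comm_monoid_add set) n)"
proof (induction n)
  case 0 then show ?case by simp
next
  case (Suc n)
  have "nsums T (Suc n) = (\<lambda>(p,q). p + q) ` (T \<times> nsums T n)" by auto
  then show ?case using Suc by simp
qed

lemma nsums_fst_nonneg:
  fixes A :: "mon set"
  assumes "\<And>p. p \<in> A \<Longrightarrow> 0 \<le> fst p"
  shows "s \<in> nsums A n \<Longrightarrow> 0 \<le> fst s"
proof (induction n arbitrary: s)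
  case (Suc n)
  then obtain p q where "s = p + q" "p \<in> A" "q \<in> nsums A n" by auto
  then show ?case using Suc.IH assms by simp
qed (simp add: zero_prod_def)

lemma supp_ts_mult: "supp (ts_mult f g) \<subseteq> {p + q | p q. p \<in> supp f \<and> q \<in> supp g}"
proof
  fix r assume "r \<in> supp (ts_mult f g)"
  let ?S = "{(p, q). p \<in> supp f \<and> q \<in> supp g \<and> add_mon p q = r}"
  have "ts_mult f g r \<noteq> 0" using \<open>r \<in> supp (ts_mult f g)\<close> by (simp add: supp_def)
  moreover have "ts_mult f g r = (\<Sum>(p, q)\<in>?S. f p * g q)" by (simp add: ts_mult_def)
  ultimately have "?S \<noteq> {}" by (intro notI) simp
  then obtain p q where "(p, q) \<in> ?S" by blast
  then have "p \<in> supp f" "q \<in> supp g" "r = p + q" by (auto simp: add_mon_eq_plus)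
  then show "r \<in> {p + q | p q. p \<in> supp f \<and> q \<in> supp g}" by blast
qed

lemma supp_ts_pow: "supp (ts_pow e n) \<subseteq> nsums (supp e) n"
proof (induction n)
  case 0 then show ?case by (auto simp: supp_def ts_one_def ts_mono_def zero_prod_def)
next
  case (Suc n)
  show ?case
  proof
    fix x assume "x \<in> supp (ts_pow e (Suc n))"
    then obtain p q where "p \<in> supp e" "q \<in> supp (ts_pow e n)" "x = p + q"
      using supp_ts_mult[of e "ts_pow e n"] by auto
    then show "x \<in> nsums (supp e) (Suc n)" using Suc.IH by auto
  qed
qed

lemma supp_ts_psubst: "supp (ts_psubst c e) \<subseteq> (\<Union>n. supp (ts_pow e n))"
proof
  fix r assume "r \<in> supp (ts_psubst c e)"
  then have "ts_psubst c e r \<noteq> 0" by (simp add: supp_def)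
  moreover have "ts_psubst c e r = (\<Sum>n\<in>{n. ts_pow e n r \<noteq> 0}. c n * ts_pow e n r)"
    by (simp add: ts_psubst_def)
  ultimately have "{n. ts_pow e n r \<noteq> 0} \<noteq> {}" by (intro notI) simp
  then show "r \<in> (\<Union>n. supp (ts_pow e n))" by (auto simp: supp_def)
qed

lemma ts_one_apply: "ts_one r = (if r = 0 then 1 else 0)"
  by (simp add: ts_one_def ts_mono_def zero_prod_def)

lemma ts_mult_ts_one: "ts_mult f ts_one = f"
proof
  fix r
  have "supp ts_one = {0}" by (auto simp: supp_def ts_one_apply)
  then have "{(p, q). p \<in> supp f \<and> q \<in> supp ts_one \<and> add_mon p q = r}
             = {(p, q). p = r \<and> q = 0 \<and> f r \<noteq> 0}"
    by (auto simp: add_mon_eq_plus supp_def)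
  also have "\<dots> = (if f r \<noteq> 0 then {(r, 0)} else {})" by auto
  finally show "ts_mult f ts_one r = f r" by (auto simp: ts_mult_def ts_one_apply)
qed

lemma ts_mult_ts_mono_1: "ts_mult (ts_mono 1 v) f r = f (r - v)"
proof -
  have "{(p, q). p \<in> supp (ts_mono 1 v) \<and> q \<in> supp f \<and> add_mon p q = r}
        = (if f (r - v) \<noteq> 0 then {(v, r - v)} else {})"
  proof (rule set_eqI)
    fix x :: "mon \<times> mon"
    obtain p q where x: "x = (p, q)" by (cases x)
    have "p + q = r \<longleftrightarrow> q = r - p" by (metis add.commute eq_diff_eq)
    then show "x \<in> {(p, q). p \<in> supp (ts_mono 1 v) \<and> q \<in> supp f \<and> add_mon p q = r}
               \<longleftrightarrow> x \<in> (if f (r - v) \<noteq> 0 then {(v, r - v)} else {})"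
      unfolding x by (simp add: supp_def ts_mono_def add_mon_eq_plus) (metis (no_types))
  qed
  then show ?thesis by (simp add: ts_mult_def ts_mono_def)
qed

lemma ts_mult_eq_at:
  assumes "\<And>p q. p \<in> supp f1 \<union> supp f2 \<Longrightarrow> q \<in> supp g1 \<union> supp g2 \<Longrightarrow> p + q = r
             \<Longrightarrow> p \<in> D \<and> q \<in> E"
    and "\<And>s. s \<in> D \<Longrightarrow> f1 s = f2 s" and "\<And>s. s \<in> E \<Longrightarrow> g1 s = g2 s"
  shows "ts_mult f1 g1 r = ts_mult f2 g2 r"
proof -
  have same: "f1 p = f2 p \<and> g1 q = g2 q"
    if "p \<in> supp f1 \<union> supp f2" "q \<in> supp g1 \<union> supp g2" "p + q = r" for p q
    using assms that by blast
  have "p \<in> supp f1 \<and> q \<in> supp g1 \<longleftrightarrow> p \<in> supp f2 \<and> q \<in> supp g2"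
    if "p + q = r" for p q
    using same[of p q] that unfolding supp_def by auto
  then have "{(p, q). p \<in> supp f1 \<and> q \<in> supp g1 \<and> add_mon p q = r} =
             {(p, q). p \<in> supp f2 \<and> q \<in> supp g2 \<and> add_mon p q = r}"
    unfolding add_mon_eq_plus by blast
  moreover have "f1 p * g1 q = f2 p * g2 q"
    if "p \<in> supp f2" "q \<in> supp g2" "p + q = r" for p q
    using same[of p q] that by simp
  ultimately show ?thesis
    unfolding ts_mult_def by (intro sum.cong) (auto simp: add_mon_eq_plus)
qed

lemma ts_mult_as_sum:
  assumes "finite X" "{(p, q). p \<in> supp f \<and> q \<in> supp g \<and> p + q = r} \<subseteq> X"
    and "\<And>p q. (p, q) \<in> X \<Longrightarrow> p + q = r"
  shows "ts_mult f g r = (\<Sum>(p, q)\<in>X. f p * g q)"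
  unfolding ts_mult_def add_mon_eq_plus
proof (rule sum.mono_neutral_left[OF assms(1,2)], intro ballI)
  fix x assume "x \<in> X - {(p, q). p \<in> supp f \<and> q \<in> supp g \<and> p + q = r}"
  moreover obtain p q where "x = (p, q)" by (cases x)
  ultimately show "(case x of (p, q) \<Rightarrow> f p * g q) = 0"
    using assms(3)[of p q] by (auto simp: supp_def)
qed

lemma ts_psubst_as_sum:
  assumes "finite N" "{n. ts_pow e n r \<noteq> 0} \<subseteq> N"
  shows "ts_psubst c e r = (\<Sum>n\<in>N. c n * ts_pow e n r)"
  unfolding ts_psubst_def by (rule sum.mono_neutral_left[OF assms]) auto

section \<open>Infinitesimal series and truncation\<close>

definition infinitesimal :: "ts \<Rightarrow> bool" where
  "infinitesimal e \<longleftrightarrow> (\<forall>p\<in>supp e. 0 < p)"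

lemma infinitesimal_supp_ts_pow_Suc:
  "infinitesimal e \<Longrightarrow> p \<in> supp (ts_pow e (Suc n)) \<Longrightarrow> 0 < p"
  using supp_ts_pow nsums_pos unfolding infinitesimal_def by blast

lemma infinitesimal_supp_ts_pow: "infinitesimal e \<Longrightarrow> p \<in> supp (ts_pow e n) \<Longrightarrow> 0 \<le> p"
  using supp_ts_pow nsums_nonneg unfolding infinitesimal_def by blast

lemma infinitesimal_supp_ts_psubst: "infinitesimal e \<Longrightarrow> p \<in> supp (ts_psubst c e) \<Longrightarrow> 0 \<le> p"
  using supp_ts_psubst infinitesimal_supp_ts_pow by blast

lemma ts_pow_eq_le:
  assumes "infinitesimal e1" "infinitesimal e2" "\<And>s. s \<le> r \<Longrightarrow> e1 s = e2 s" "s \<le> r"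
  shows "ts_pow e1 n s = ts_pow e2 n s"
  using assms(4)
proof (induction n arbitrary: s)
  case 0 then show ?case by simp
next
  case (Suc n)
  show ?case unfolding ts_pow.simps
  proof (rule ts_mult_eq_at[where D = "{..r}" and E = "{..r}"])
    fix p q
    assume "p \<in> supp e1 \<union> supp e2" "q \<in> supp (ts_pow e1 n) \<union> supp (ts_pow e2 n)" "p + q = s"
    then have "0 \<le> p" "0 \<le> q"
      using assms(1,2) infinitesimal_supp_ts_pow less_imp_le unfolding infinitesimal_def by blast+
    then show "p \<in> {..r} \<and> q \<in> {..r}"
      using mon_summands_le \<open>p + q = s\<close> Suc.prems by (meson atMost_iff order_trans)
  qed (use assms(3) Suc.IH in auto)
qed

lemma ts_pow_eq_less:
  assumes "infinitesimal e1" "infinitesimal e2" "\<And>s. s < r \<Longrightarrow> e1 s = e2 s" "s < r"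
  shows "ts_pow e1 n s = ts_pow e2 n s"
  using ts_pow_eq_le[OF assms(1,2), of s] assms(3,4) by (meson le_less_trans order_refl)

text \<open>Only the first power sees the top coefficient \<open>e r\<close>: every other power of an
  infinitesimal at \<open>r\<close> is a sum of products of coefficients at monomials strictly below \<open>r\<close>.\<close>
lemma ts_pow_eq_at:
  assumes "infinitesimal e1" "infinitesimal e2" "\<And>s. s < r \<Longrightarrow> e1 s = e2 s" "n \<noteq> 1"
  shows "ts_pow e1 n r = ts_pow e2 n r"
proof (cases n)
  case 0 then show ?thesis by simp
next
  case (Suc k)
  with assms(4) obtain j where k: "k = Suc j" by (cases k) auto
  show ?thesis unfolding Suc ts_pow.simps
  proof (rule ts_mult_eq_at[where D = "{..<r}" and E = "{..<r}"])
    fix p q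
    assume "p \<in> supp e1 \<union> supp e2" "q \<in> supp (ts_pow e1 k) \<union> supp (ts_pow e2 k)" "p + q = r"
    then have "0 < p" "0 < q"
      using assms(1,2) infinitesimal_supp_ts_pow_Suc unfolding k infinitesimal_def by blast+
    then show "p \<in> {..<r} \<and> q \<in> {..<r}" using mon_summands_less[of p q] \<open>p + q = r\<close> by auto
  qed (use assms(3) ts_pow_eq_less[OF assms(1-3)] in auto)
qed

lemma ts_pow_at_0: "infinitesimal e \<Longrightarrow> ts_pow e n 0 = (if n = 0 then 1 else 0)"
  using infinitesimal_supp_ts_pow_Suc[of e 0]
  by (cases n) (auto simp: ts_one_apply supp_def)

lemma ts_psubst_at_0: "infinitesimal e \<Longrightarrow> ts_psubst c e 0 = c 0"
  by (subst ts_psubst_as_sum[where N = "{0}"]) (auto simp: ts_pow_at_0 ts_one_apply)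

definition ts_trunc :: "mon \<Rightarrow> ts \<Rightarrow> ts" where
  "ts_trunc r e = (\<lambda>s. if s < r then e s else 0)"

lemma infinitesimal_ts_trunc: "infinitesimal e \<Longrightarrow> infinitesimal (ts_trunc r e)"
  by (simp add: infinitesimal_def supp_def ts_trunc_def)

lemma supp_ts_trunc: "supp (ts_trunc r e) = {s \<in> supp e. s < r}"
  by (auto simp: supp_def ts_trunc_def)

lemma ts_psubst_trunc:
  assumes e: "infinitesimal e" and fin: "finite {n. ts_pow (ts_trunc r e) n r \<noteq> 0}"
  shows "ts_psubst c e r = ts_psubst c (ts_trunc r e) r + c 1 * e r"
proof -
  let ?e' = "ts_trunc r e" and ?N = "insert 1 {n. ts_pow (ts_trunc r e) n r \<noteq> 0}"
  have e': "infinitesimal ?e'" using e by (rule infinitesimal_ts_trunc)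
  have other: "ts_pow e n r = ts_pow ?e' n r" if "n \<noteq> 1" for n
    using ts_pow_eq_at[OF e e' _ that] by (simp add: ts_trunc_def)
  have "ts_psubst c e r = (\<Sum>n\<in>?N. c n * ts_pow e n r)"
    by (rule ts_psubst_as_sum) (use fin other in auto)
  moreover have "ts_psubst c ?e' r = (\<Sum>n\<in>?N. c n * ts_pow ?e' n r)"
    by (rule ts_psubst_as_sum) (use fin in auto)
  moreover have "(\<Sum>n\<in>?N. c n * ts_pow e n r) - (\<Sum>n\<in>?N. c n * ts_pow ?e' n r)
                 = (\<Sum>n\<in>?N. if n = 1 then c 1 * e r else 0)"
    unfolding sum_subtractf[symmetric]
    by (rule sum.cong) (auto simp: other right_diff_distrib ts_trunc_def ts_mult_ts_one)
  ultimately show ?thesis using fin by simp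
qed

lemma ts_mult_eq_at_top:
  assumes nonneg: "\<And>p. p \<in> supp f1 \<union> supp f2 \<union> supp g1 \<union> supp g2 \<Longrightarrow> 0 \<le> p"
    and f: "\<And>s. s < r \<Longrightarrow> f1 s = f2 s" and g: "\<And>s. s \<le> r \<Longrightarrow> g1 s = g2 s"
    and g0: "g1 0 = 1" and r0: "0 \<le> r"
    and fin: "finite {(p, q). p \<in> supp f2 \<and> q \<in> supp g2 \<and> p + q = r}"
  shows "ts_mult f1 g1 r = ts_mult f2 g2 r + (f1 r - f2 r)"
proof -
  define X where "X = insert (r, 0) {(p, q). p \<in> supp f2 \<and> q \<in> supp g2 \<and> p + q = r}"
  have finX: "finite X" using fin by (simp add: X_def)
  have X: "p + q = r \<and> 0 \<le> p \<and> 0 \<le> q" if "(p, q) \<in> X" for p q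
    using that r0 nonneg[of p] nonneg[of q] by (auto simp: X_def)
  have below: "p < r \<and> q \<le> r" if "(p, q) \<in> X" "(p, q) \<noteq> (r, 0)" for p q
  proof -
    from X[OF that(1)] have "p + q = r" "0 \<le> p" "0 \<le> q" by auto
    then show ?thesis using mon_summands_le that(2) by fastforce
  qed
  have in_X: "(p, q) \<in> X" if pq: "p \<in> supp f1" "q \<in> supp g1" "p + q = r" for p q
  proof -
    have "0 \<le> p" "0 \<le> q" using pq nonneg by blast+
    then have "p \<le> r" "q \<le> r" using mon_summands_le pq(3) by blast+
    then consider "p < r" | "p = r" "q = 0" using pq(3) by fastforce
    then show "(p, q) \<in> X"
      by cases (use pq f g \<open>q \<le> r\<close> in \<open>auto simp: X_def supp_def\<close>)
  qed
  have "ts_mult f1 g1 r = (\<Sum>(p, q)\<in>X. f1 p * g1 q)"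
    by (rule ts_mult_as_sum[OF finX]) (use in_X X in blast)+
  moreover have "ts_mult f2 g2 r = (\<Sum>(p, q)\<in>X. f2 p * g2 q)"
    by (rule ts_mult_as_sum[OF finX]) (use X in \<open>simp only: X_def subset_insertI, blast\<close>)
  ultimately have "ts_mult f1 g1 r - ts_mult f2 g2 r
                   = (\<Sum>x\<in>X. case x of (p, q) \<Rightarrow> f1 p * g1 q - f2 p * g2 q)"
    by (simp add: sum_subtractf[symmetric] case_prod_beta)
  also have "\<dots> = (\<Sum>x\<in>X. if x = (r, 0) then f1 r - f2 r else 0)"
  proof (rule sum.cong[OF refl])
    fix x assume "x \<in> X"
    moreover obtain p q where "x = (p, q)" by (cases x)
    ultimately show "(case x of (p, q) \<Rightarrow> f1 p * g1 q - f2 p * g2 q)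
                     = (if x = (r, 0) then f1 r - f2 r else 0)"
      using below[of p q] f[of p] g[of q] g[of 0] g0 r0 by auto
  qed
  also have "\<dots> = f1 r - f2 r"
    using sum.delta[OF finX, of "(r, 0)" "\<lambda>_. f1 r - f2 r"] by (simp add: X_def)
  finally show ?thesis by simp
qed

section \<open>The composition factor\<close>

definition neg_ell_log1p :: "ts \<Rightarrow> ts" where
  "neg_ell_log1p e = ts_scale (-1) (ts_mult (ts_mono 1 (0, 1, 0)) (ts_log1p e))"

definition ell_factor :: "int \<Rightarrow> ts \<Rightarrow> ts" where
  "ell_factor m e = ts_binom (- real_of_int m) (neg_ell_log1p e)"

definition comp_factor :: "real \<Rightarrow> int \<Rightarrow> ts \<Rightarrow> ts" where
  "comp_factor \<alpha> m e = ts_mult (ts_binom \<alpha> e) (ell_factor m e)"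

lemma comp_gam_eq_comp_factor:
  "comp_gam a \<alpha> m \<phi>
   = ts_scale a (ts_mult (ts_mono 1 (\<alpha>, real_of_int m, 0)) (comp_factor \<alpha> m (ts_eps \<phi>)))"
  by (simp add: comp_gam_def comp_factor_def ell_factor_def neg_ell_log1p_def Let_def)

lemma neg_ell_log1p_apply: "neg_ell_log1p e s = - ts_log1p e (s - (0, 1, 0))"
  by (simp add: neg_ell_log1p_def ts_scale_def ts_mult_ts_mono_1)

lemma ell_exponent_pos: "(0::mon) < (0, 1, 0)"
  by (simp add: zero_prod_def)

lemma infinitesimal_neg_ell_log1p:
  assumes "infinitesimal e"
  shows "infinitesimal (neg_ell_log1p e)"
  unfolding infinitesimal_def
proof
  fix s assume "s \<in> supp (neg_ell_log1p e)"
  then have "s - (0, 1, 0) \<in> supp (ts_log1p e)" by (simp add: supp_def neg_ell_log1p_apply)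
  then have "0 \<le> s - (0, 1, 0)"
    using infinitesimal_supp_ts_psubst[OF assms] unfolding ts_log1p_def by blast
  then show "0 < s"
    using mon_le_add[of "s - (0, 1, 0)" "(0, 1, 0)"] ell_exponent_pos by (simp add: add.commute)
qed

lemma ts_binom_eq_less:
  assumes "infinitesimal e1" "infinitesimal e2" "\<And>s. s < r \<Longrightarrow> e1 s = e2 s" "s < r"
  shows "ts_binom c e1 s = ts_binom c e2 s"
  using ts_pow_eq_less[OF assms] by (simp add: ts_binom_def ts_psubst_def)

lemma ell_factor_eq_le:
  assumes e: "infinitesimal e1" "infinitesimal e2" "\<And>s. s < r \<Longrightarrow> e1 s = e2 s" and "s \<le> r"
  shows "ell_factor m e1 s = ell_factor m e2 s"
proof -
  have "neg_ell_log1p e1 t = neg_ell_log1p e2 t" if "t \<le> r" for t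
  proof -
    have "t - (0, 1, 0) < r"
      using mon_less_add[OF ell_exponent_pos, of "t - (0, 1, 0)"] that by simp
    then show ?thesis
      using ts_pow_eq_less[OF e] by (simp add: neg_ell_log1p_apply ts_log1p_def ts_psubst_def)
  qed
  then have "ts_pow (neg_ell_log1p e1) n s = ts_pow (neg_ell_log1p e2) n s" for n
    using ts_pow_eq_le[OF infinitesimal_neg_ell_log1p[OF e(1)] infinitesimal_neg_ell_log1p[OF e(2)]]
      \<open>s \<le> r\<close> by blast
  then show ?thesis by (simp add: ell_factor_def ts_binom_def ts_psubst_def)
qed

lemma supp_ts_binom_nonneg: "infinitesimal e \<Longrightarrow> p \<in> supp (ts_binom c e) \<Longrightarrow> 0 \<le> p"
  unfolding ts_binom_def by (rule infinitesimal_supp_ts_psubst)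

lemma supp_ell_factor_nonneg: "infinitesimal e \<Longrightarrow> p \<in> supp (ell_factor m e) \<Longrightarrow> 0 \<le> p"
  unfolding ell_factor_def using supp_ts_binom_nonneg infinitesimal_neg_ell_log1p by blast

lemma ts_binom_at_0: "infinitesimal e \<Longrightarrow> ts_binom c e 0 = 1"
  by (simp add: ts_binom_def ts_psubst_at_0)

lemma ell_factor_at_0: "infinitesimal e \<Longrightarrow> ell_factor m e 0 = 1"
  by (simp add: ell_factor_def ts_binom_at_0 infinitesimal_neg_ell_log1p)

lemma comp_factor_at_0:
  assumes e: "infinitesimal e"
  shows "comp_factor \<alpha> m e 0 = 1"
proof -
  have "ts_mult (ts_binom \<alpha> e) (ell_factor m e) 0 = ts_binom \<alpha> e 0 * ell_factor m e 0"
  proof (subst ts_mult_as_sum[where X = "{(0, 0)}"])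
    show "{(p, q). p \<in> supp (ts_binom \<alpha> e) \<and> q \<in> supp (ell_factor m e) \<and> p + q = 0}
          \<subseteq> {(0, 0)}"
    proof safe
      fix p q assume "p \<in> supp (ts_binom \<alpha> e)" "q \<in> supp (ell_factor m e)" "p + q = 0"
      then have "0 \<le> p" "0 \<le> q" "p \<le> 0"
        using supp_ts_binom_nonneg[OF e] supp_ell_factor_nonneg[OF e] mon_le_add[of q p] by auto
      then show "p = 0" "q = 0" using \<open>p + q = 0\<close> by auto
    qed
  qed auto
  then show ?thesis by (simp add: comp_factor_def ts_binom_at_0[OF e] ell_factor_at_0[OF e])
qed

lemma comp_factor_trunc:
  assumes e: "infinitesimal e" and r0: "0 \<le> r"
    and fin_pow: "finite {n. ts_pow (ts_trunc r e) n r \<noteq> 0}"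
    and fin_split: "finite {(p, q). p \<in> supp (ts_binom \<alpha> (ts_trunc r e))
                                \<and> q \<in> supp (ell_factor m (ts_trunc r e)) \<and> p + q = r}"
  shows "comp_factor \<alpha> m e r = comp_factor \<alpha> m (ts_trunc r e) r + \<alpha> * e r"
proof -
  let ?e' = "ts_trunc r e"
  have e': "infinitesimal ?e'" using e by (rule infinitesimal_ts_trunc)
  have agree: "\<And>s. s < r \<Longrightarrow> e s = ?e' s" by (simp add: ts_trunc_def)
  have "ts_binom \<alpha> e r = ts_binom \<alpha> ?e' r + \<alpha> * e r"
    using ts_psubst_trunc[OF e fin_pow] by (simp add: ts_binom_def)
  moreover have "comp_factor \<alpha> m e r
                 = comp_factor \<alpha> m ?e' r + (ts_binom \<alpha> e r - ts_binom \<alpha> ?e' r)"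
    unfolding comp_factor_def
  proof (rule ts_mult_eq_at_top[OF _ _ _ _ r0 fin_split])
    show "0 \<le> p" if "p \<in> supp (ts_binom \<alpha> e) \<union> supp (ts_binom \<alpha> ?e')
                       \<union> supp (ell_factor m e) \<union> supp (ell_factor m ?e')" for p
      using that supp_ts_binom_nonneg[OF e] supp_ts_binom_nonneg[OF e']
        supp_ell_factor_nonneg[OF e] supp_ell_factor_nonneg[OF e'] by blast
  qed (use ts_binom_eq_less[OF e e' agree] ell_factor_eq_le[OF e e' agree]
         ell_factor_at_0[OF e] in auto)
  ultimately show ?thesis by simp
qed

section \<open>Solving the triangular system\<close>

lemma wf_less_on_well_ordered:
  assumes "well_ordered_mon M"
  shows "wf {(s, r). s \<in> M \<and> s < r}"
  unfolding wf_eq_minimal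
proof (intro allI impI)
  fix Q :: "mon set" and x assume "x \<in> Q"
  show "\<exists>z\<in>Q. \<forall>y. (y, z) \<in> {(s, r). s \<in> M \<and> s < r} \<longrightarrow> y \<notin> Q"
  proof (cases "Q \<inter> M = {}")
    case True then show ?thesis using \<open>x \<in> Q\<close> by blast
  next
    case False
    then obtain z where z: "z \<in> Q \<inter> M" "\<And>c. c \<in> Q \<inter> M \<Longrightarrow> z \<le> c"
      using assms unfolding well_ordered_mon_iff by (meson inf_le2)
    show ?thesis
    proof (intro bexI allI impI)
      fix y assume "(y, z) \<in> {(s, r). s \<in> M \<and> s < r}"
      then have "y \<in> M" "y < z" by simp_all
      then show "y \<notin> Q" using z(2) by (meson IntI leD)
    qed (use z in blast)
  qed
qed

lemma well_ordered_recursion: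
  assumes "well_ordered_mon M"
  shows "\<exists>E::ts. \<forall>r. E r = F (\<lambda>s. if s < r \<and> s \<in> M then E s else 0) r"
proof -
  define R where "R = {(s, r). s \<in> M \<and> s < r}"
  define F' where "F' = (\<lambda>f r. F (\<lambda>s. if s < r \<and> s \<in> M then f s else 0) r)"
  have "wfrec R F' r = F (\<lambda>s. if s < r \<and> s \<in> M then wfrec R F' s else 0) r" for r
  proof -
    have "wfrec R F' r = F' (cut (wfrec R F') R r) r"
      unfolding R_def by (rule wfrec[OF wf_less_on_well_ordered[OF assms]])
    also have "\<dots> = F (\<lambda>s. if s < r \<and> s \<in> M then wfrec R F' s else 0) r"
      unfolding F'_def by (rule arg_cong[where f = "\<lambda>f. F f r"]) (auto simp: cut_def R_def)
    finally show ?thesis .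
  qed
  then show ?thesis by blast
qed

locale exponent_semigroup =
  fixes M :: "mon set"
  assumes pos: "x \<in> M \<Longrightarrow> 0 < x"
    and add_closed: "x \<in> M \<Longrightarrow> y \<in> M \<Longrightarrow> x + y \<in> M"
    and ell_mem: "(0, 1, 0) \<in> M"
    and finite_nsums: "finite {n. r \<in> nsums M n}"
    and finite_splits: "finite {(p, q). p \<in> insert 0 M \<and> q \<in> insert 0 M \<and> p + q = r}"
    and well_ordered: "well_ordered_mon M"
begin

lemma add_closed0: "x \<in> insert 0 M \<Longrightarrow> y \<in> insert 0 M \<Longrightarrow> x + y \<in> insert 0 M"
  using add_closed[of x y] by auto

lemma infinitesimal_if_supp_subset: "supp e \<subseteq> M \<Longrightarrow> infinitesimal e"
  unfolding infinitesimal_def using pos by blast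

lemma nsums_subset: "A \<subseteq> M \<Longrightarrow> nsums A n \<subseteq> insert 0 M"
proof (induction n)
  case 0 then show ?case by simp
next
  case (Suc n)
  show ?case
  proof
    fix x assume "x \<in> nsums A (Suc n)"
    then obtain p q where "x = p + q" "p \<in> A" "q \<in> nsums A n"
      by (simp only: nsums.simps mem_Collect_eq) blast
    then show "x \<in> insert 0 M" using Suc add_closed0 by blast
  qed
qed

lemma supp_ts_pow_subset: "supp e \<subseteq> M \<Longrightarrow> supp (ts_pow e n) \<subseteq> insert 0 M"
  using supp_ts_pow nsums_subset by blast

lemma supp_ts_psubst_subset: "supp e \<subseteq> M \<Longrightarrow> supp (ts_psubst c e) \<subseteq> insert 0 M"
  using supp_ts_psubst supp_ts_pow_subset by blast

lemma supp_neg_ell_log1p_subset: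
  assumes "supp e \<subseteq> M"
  shows "supp (neg_ell_log1p e) \<subseteq> M"
proof
  fix s assume "s \<in> supp (neg_ell_log1p e)"
  then have "s - (0, 1, 0) \<in> supp (ts_log1p e)" by (simp add: supp_def neg_ell_log1p_apply)
  then have "s - (0, 1, 0) \<in> insert 0 M"
    using supp_ts_psubst_subset[OF assms] unfolding ts_log1p_def by blast
  then have "s - (0, 1, 0) + (0, 1, 0) \<in> M" by (metis add_0 add_closed ell_mem insertE)
  then show "s \<in> M" by simp
qed

lemma supp_ts_binom_subset: "supp e \<subseteq> M \<Longrightarrow> supp (ts_binom c e) \<subseteq> insert 0 M"
  unfolding ts_binom_def by (rule supp_ts_psubst_subset)

lemma supp_ell_factor_subset: "supp e \<subseteq> M \<Longrightarrow> supp (ell_factor m e) \<subseteq> insert 0 M"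
  unfolding ell_factor_def by (intro supp_ts_binom_subset supp_neg_ell_log1p_subset)

lemma supp_comp_factor_subset:
  assumes "supp e \<subseteq> M"
  shows "supp (comp_factor \<alpha> m e) \<subseteq> insert 0 M"
proof
  fix x assume "x \<in> supp (comp_factor \<alpha> m e)"
  then obtain p q where "p \<in> supp (ts_binom \<alpha> e)" "q \<in> supp (ell_factor m e)" "x = p + q"
    using supp_ts_mult unfolding comp_factor_def by blast
  then show "x \<in> insert 0 M"
    using supp_ts_binom_subset[OF assms] supp_ell_factor_subset[OF assms] add_closed0 by blast
qed

lemma finite_ts_pow_nonzero:
  assumes "supp e \<subseteq> M"
  shows "finite {n. ts_pow e n r \<noteq> 0}"
proof (rule finite_subset[OF _ finite_nsums])
  show "{n. ts_pow e n r \<noteq> 0} \<subseteq> {n. r \<in> nsums M n}"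
    using supp_ts_pow[of e] nsums_mono[OF assms] by (auto simp: supp_def)
qed

lemma finite_comp_factor_splits:
  assumes "supp e \<subseteq> M"
  shows "finite {(p, q). p \<in> supp (ts_binom \<alpha> e) \<and> q \<in> supp (ell_factor m e) \<and> p + q = r}"
  by (rule finite_subset[OF _ finite_splits[of r]])
    (use supp_ts_binom_subset[OF assms] supp_ell_factor_subset[OF assms] in blast)

lemma comp_factor_trunc_in:
  assumes "infinitesimal e" "supp (ts_trunc r e) \<subseteq> M" "0 \<le> r"
  shows "comp_factor \<alpha> m e r = comp_factor \<alpha> m (ts_trunc r e) r + \<alpha> * e r"
  by (rule comp_factor_trunc[OF assms(1,3)]
      finite_ts_pow_nonzero[OF assms(2)] finite_comp_factor_splits[OF assms(2)])+

lemma solution_supp_subset: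
  assumes h: "supp h \<subseteq> insert 0 M" and e: "infinitesimal e" "well_ordered_mon (supp e)"
    and eq: "comp_factor \<alpha> m e = h" and "\<alpha> \<noteq> 0"
  shows "supp e \<subseteq> M"
proof (rule ccontr)
  assume "\<not> supp e \<subseteq> M"
  then obtain r where r: "r \<in> supp e - M" and least: "\<And>c. c \<in> supp e - M \<Longrightarrow> r \<le> c"
    using e(2) unfolding well_ordered_mon_iff by (metis Diff_eq_empty_iff Diff_subset)
  have "0 < r" using e(1) r by (simp add: infinitesimal_def)
  have trunc: "supp (ts_trunc r e) \<subseteq> M"
    using least by (force simp: supp_ts_trunc)
  have "r \<notin> insert 0 M" using r \<open>0 < r\<close> by auto
  then have "comp_factor \<alpha> m e r = 0" "comp_factor \<alpha> m (ts_trunc r e) r = 0"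
    using eq h supp_comp_factor_subset[OF trunc] by (auto simp: supp_def)
  then have "\<alpha> * e r = 0"
    using comp_factor_trunc_in[OF e(1) trunc] \<open>0 < r\<close> by simp
  then show False using \<open>\<alpha> \<noteq> 0\<close> r by (simp add: supp_def)
qed

lemma solution_exists:
  assumes h: "supp h \<subseteq> insert 0 M" "h 0 = 1" and "\<alpha> \<noteq> 0"
  shows "\<exists>e. supp e \<subseteq> M \<and> comp_factor \<alpha> m e = h"
proof -
  define F where "F = (\<lambda>(f::ts) r. if r \<in> M then (h r - comp_factor \<alpha> m f r) / \<alpha> else 0)"
  obtain E where E: "E r = F (\<lambda>s. if s < r \<and> s \<in> M then E s else 0) r" for r
    using well_ordered_recursion[OF well_ordered] by blast
  have suppE: "supp E \<subseteq> M" using E by (auto simp: supp_def F_def)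
  have trunc: "ts_trunc r E = (\<lambda>s. if s < r \<and> s \<in> M then E s else 0)" for r
    using suppE by (auto simp: supp_def ts_trunc_def fun_eq_iff)
  have "comp_factor \<alpha> m E r = h r" for r
  proof (cases "r \<in> M")
    case True
    have "supp (ts_trunc r E) \<subseteq> M" using suppE by (auto simp: supp_ts_trunc)
    then have "comp_factor \<alpha> m E r = comp_factor \<alpha> m (ts_trunc r E) r + \<alpha> * E r"
      using comp_factor_trunc_in infinitesimal_if_supp_subset[OF suppE] pos[OF True]
      by (simp add: less_imp_le)
    moreover have "E r = (h r - comp_factor \<alpha> m (ts_trunc r E) r) / \<alpha>"
      using E[of r] True by (simp add: F_def trunc)
    ultimately show ?thesis using \<open>\<alpha> \<noteq> 0\<close> by simp
  next
    case False
    show ?thesis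
    proof (cases "r = 0")
      case True then show ?thesis
        using comp_factor_at_0[OF infinitesimal_if_supp_subset[OF suppE]] h(2) by simp
    next
      case False
      then have "r \<notin> supp (comp_factor \<alpha> m E)" "r \<notin> supp h"
        using \<open>r \<notin> M\<close> supp_comp_factor_subset[OF suppE] h(1) by blast+
      then show ?thesis by (simp add: supp_def)
    qed
  qed
  then show ?thesis using suppE by blast
qed

end

section \<open>Locally finite exponent sets\<close>

lemma loc_fin_subset: "loc_fin B \<Longrightarrow> A \<subseteq> B \<Longrightarrow> loc_fin A"
  unfolding loc_fin_def
proof
  fix c assume "\<forall>c. finite {x \<in> B. x \<le> c}" "A \<subseteq> B"
  moreover have "{x \<in> A. x \<le> c} \<subseteq> {x \<in> B. x \<le> c}" using \<open>A \<subseteq> B\<close> by blast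
  ultimately show "finite {x \<in> A. x \<le> c}" using finite_subset by blast
qed

lemma loc_fin_has_least: assumes "loc_fin A" "A \<noteq> {}" shows "\<exists>a\<in>A. \<forall>x\<in>A. a \<le> x"
proof -
  obtain y where y: "y \<in> A" using assms(2) by blast
  let ?S = "{x \<in> A. x \<le> y}"
  have fin: "finite ?S" using assms(1) by (simp add: loc_fin_def)
  have ne: "?S \<noteq> {}" using y by auto
  have "Min ?S \<in> ?S" using Min_in[OF fin ne] .
  moreover have "\<forall>x\<in>A. Min ?S \<le> x"
  proof
    fix x assume "x \<in> A"
    show "Min ?S \<le> x"
    proof (cases "x \<le> y")
      case True then show ?thesis using Min_le[OF fin] \<open>x \<in> A\<close> by simp
    next
      case False then show ?thesis using Min_le[OF fin, of y] y by simp
    qed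
  qed
  ultimately show ?thesis by blast
qed

lemma loc_fin_bdd_below: assumes "loc_fin A" shows "\<exists>L. \<forall>x\<in>A. L \<le> x"
proof (cases "A = {}")
  case True then show ?thesis by simp
next
  case False then obtain a where "a \<in> A" "\<forall>x\<in>A. a \<le> x" using loc_fin_has_least[OF assms] by blast
  then show ?thesis by blast
qed

lemma finite_Ints_between: "finite {x::real. x \<in> \<int> \<and> L \<le> x \<and> x \<le> c}"
proof -
  have "{x::real. x \<in> \<int> \<and> L \<le> x \<and> x \<le> c} \<subseteq> real_of_int ` {\<lceil>L\<rceil>..\<lfloor>c\<rfloor>}"
  proof
    fix x assume "x \<in> {x::real. x \<in> \<int> \<and> L \<le> x \<and> x \<le> c}"
    then obtain k where k: "x = real_of_int k" "L \<le> x" "x \<le> c" by (auto elim: Ints_cases)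
    then have "k \<in> {\<lceil>L\<rceil>..\<lfloor>c\<rfloor>}" by (simp add: ceiling_le_iff le_floor_iff)
    then show "x \<in> real_of_int ` {\<lceil>L\<rceil>..\<lfloor>c\<rfloor>}" using k by blast
  qed
  then show ?thesis by (rule finite_subset) simp
qed

lemma loc_fin_Ints_bdd_below: "A \<subseteq> \<int> \<Longrightarrow> (\<And>x. x \<in> A \<Longrightarrow> L \<le> x) \<Longrightarrow> loc_fin A"
  unfolding loc_fin_def
  by (intro allI finite_subset[OF _ finite_Ints_between[of L]]) blast

lemma loc_fin_Un: "loc_fin A \<Longrightarrow> loc_fin B \<Longrightarrow> loc_fin (A \<union> B)"
  unfolding loc_fin_def
proof
  fix c assume "\<forall>c. finite {x \<in> A. x \<le> c}" "\<forall>c. finite {x \<in> B. x \<le> c}"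
  then have "finite ({x \<in> A. x \<le> c} \<union> {x \<in> B. x \<le> c})" by blast
  then show "finite {x \<in> A \<union> B. x \<le> c}" by (rule finite_subset[rotated]) blast
qed

lemma loc_fin_UN: "finite I \<Longrightarrow> (\<And>i. i \<in> I \<Longrightarrow> loc_fin (A i)) \<Longrightarrow> loc_fin (\<Union>i\<in>I. A i)"
  unfolding loc_fin_def
proof
  fix c assume "finite I" "\<And>i. i \<in> I \<Longrightarrow> \<forall>c. finite {x \<in> A i. x \<le> c}"
  then have "finite (\<Union>i\<in>I. {x \<in> A i. x \<le> c})" by blast
  then show "finite {x \<in> (\<Union>i\<in>I. A i). x \<le> c}" by (rule finite_subset[rotated]) blast
qed

lemma loc_fin_translate: "loc_fin A \<Longrightarrow> loc_fin ((\<lambda>x. x + t) ` A)"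
  unfolding loc_fin_def
proof
  fix c assume "\<forall>c. finite {x \<in> A. x \<le> c}"
  then have "finite ((\<lambda>x. x + t) ` {x \<in> A. x \<le> c - t})" by blast
  moreover have "{x \<in> (\<lambda>x. x + t) ` A. x \<le> c} \<subseteq> (\<lambda>x. x + t) ` {x \<in> A. x \<le> c - t}"
  proof
    fix y assume "y \<in> {x \<in> (\<lambda>x. x + t) ` A. x \<le> c}"
    then obtain x where "x \<in> A" "y = x + t" "x + t \<le> c" by blast
    then show "y \<in> (\<lambda>x. x + t) ` {x \<in> A. x \<le> c - t}" by force
  qed
  ultimately show "finite {x \<in> (\<lambda>x. x + t) ` A. x \<le> c}" by (rule finite_subset[rotated])
qed

lemma loc_fin_insert: assumes "loc_fin A" shows "loc_fin (insert a A)"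
proof -
  have "loc_fin {a}" unfolding loc_fin_def by (simp add: finite_subset[of _ "{a}"])
  then show ?thesis using loc_fin_Un[OF _ assms, of "{a}"] by simp
qed

lemma loc_fin_pos_gap: assumes "loc_fin A" shows "\<exists>\<delta>>0. \<forall>x\<in>A. 0 < x \<longrightarrow> \<delta> \<le> x"
proof (cases "{x\<in>A. 0 < x} = {}")
  case True
  then show ?thesis by (intro exI[of _ 1]) auto
next
  case False
  moreover have "loc_fin {x\<in>A. 0 < x}" using loc_fin_subset[OF assms, of "{x\<in>A. 0 < x}"] by blast
  ultimately obtain a where "a \<in> A" "0 < a" "\<forall>x\<in>A. 0 < x \<longrightarrow> a \<le> x"
    using loc_fin_has_least[of "{x\<in>A. 0 < x}"] by blast
  then show ?thesis by blast
qed

definition nested_loc_fin :: "mon set \<Rightarrow> bool" where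
  "nested_loc_fin A \<longleftrightarrow> loc_fin {g0. \<exists>g1 g2. (g0, g1, g2) \<in> A}
     \<and> (\<forall>g0. loc_fin {g1. \<exists>g2. (g0, g1, g2) \<in> A})
     \<and> (\<forall>g0 g1. loc_fin {g2. (g0, g1, g2) \<in> A})"

lemma in_L2_iff: "in_L2 f \<longleftrightarrow> (\<forall>p\<in>supp f. 0 < fst p) \<and> nested_loc_fin (supp f)"
  by (auto simp: in_L2_def nested_loc_fin_def)

lemma nested_loc_fin_subset:
  assumes "nested_loc_fin B" "A \<subseteq> B"
  shows "nested_loc_fin A"
proof -
  have "{g0. \<exists>g1 g2. (g0, g1, g2) \<in> A} \<subseteq> {g0. \<exists>g1 g2. (g0, g1, g2) \<in> B}"
    "{g1. \<exists>g2. (g0, g1, g2) \<in> A} \<subseteq> {g1. \<exists>g2. (g0, g1, g2) \<in> B}"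
    "{g2. (g0, g1, g2) \<in> A} \<subseteq> {g2. (g0, g1, g2) \<in> B}" for g0 g1
    using assms(2) by blast+
  then show ?thesis using assms(1) unfolding nested_loc_fin_def by (meson loc_fin_subset)
qed

lemma well_ordered_mon_if_nested_loc_fin: assumes "nested_loc_fin A" shows "well_ordered_mon A"
  unfolding well_ordered_mon_iff
proof (intro allI impI)
  fix B assume BA: "B \<subseteq> A" and Bne: "B \<noteq> {}"
  have LB: "nested_loc_fin B" using nested_loc_fin_subset[OF assms BA] .
  let ?B0 = "{g0. \<exists>g1 g2. (g0, g1, g2) \<in> B}"
  obtain b where "b \<in> B" using Bne by blast
  obtain b0 b1 b2 where "b = (b0, b1, b2)" using prod_cases3 by blast
  then have "b0 \<in> ?B0" using \<open>b \<in> B\<close> by blast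
  then have "?B0 \<noteq> {}" by blast
  moreover have "loc_fin ?B0" using LB by (simp add: nested_loc_fin_def)
  ultimately obtain m0 where m0: "m0 \<in> ?B0" "\<forall>x\<in>?B0. m0 \<le> x" using loc_fin_has_least by blast
  let ?B1 = "{g1. \<exists>g2. (m0, g1, g2) \<in> B}"
  have "?B1 \<noteq> {}" using m0(1) by blast
  moreover have "loc_fin ?B1" using LB by (simp add: nested_loc_fin_def)
  ultimately obtain m1 where m1: "m1 \<in> ?B1" "\<forall>x\<in>?B1. m1 \<le> x" using loc_fin_has_least by blast
  let ?B2 = "{g2. (m0, m1, g2) \<in> B}"
  have "?B2 \<noteq> {}" using m1(1) by blast
  moreover have "loc_fin ?B2" using LB by (simp add: nested_loc_fin_def)
  ultimately obtain m2 where m2: "m2 \<in> ?B2" "\<forall>x\<in>?B2. m2 \<le> x" using loc_fin_has_least by blast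
  show "\<exists>b\<in>B. \<forall>c\<in>B. b \<le> c"
  proof (intro bexI ballI)
    show "(m0, m1, m2) \<in> B" using m2(1) by simp
    fix c assume "c \<in> B"
    obtain c0 c1 c2 where c: "c = (c0, c1, c2)" using prod_cases3 by blast
    have "m0 \<le> c0" "m0 = c0 \<Longrightarrow> m1 \<le> c1" "m0 = c0 \<Longrightarrow> m1 = c1 \<Longrightarrow> m2 \<le> c2"
      using m0(2) m1(2) m2(2) \<open>c \<in> B\<close> c by blast+
    then show "(m0, m1, m2) \<le> c" unfolding c by (auto simp: less_eq_prod_def)
  qed
qed





lemma sgrp_nonneg: assumes "F \<subseteq> {0..}" shows "x \<in> sgrp (+) F \<Longrightarrow> (0::real) \<le> x"
  by (induction rule: sgrp.induct) (use assms in auto)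

text \<open>A sum of generators below \<open>c\<close> has at most \<open>x / \<delta>\<close> nonzero summands, \<open>\<delta>\<close> being a lower
  bound of the positive generators.\<close>
lemma sgrp_mem_nsums:
  fixes F :: "real set"
  assumes F0: "F \<subseteq> {0..}" and \<delta>: "\<delta> > 0" "\<forall>x\<in>F. 0 < x \<longrightarrow> \<delta> \<le> x"
  shows "x \<in> sgrp (+) F \<Longrightarrow> x \<le> c \<Longrightarrow> x \<in> nsums (insert 0 {y \<in> F. y \<le> c}) (nat \<lfloor>x / \<delta>\<rfloor>)"
proof (induction rule: sgrp.induct)
  case (gen x)
  show ?case
  proof (cases "x = 0")
    case False
    then have "\<delta> \<le> x" using gen F0 \<delta> by force
    then have "1 \<le> nat \<lfloor>x / \<delta>\<rfloor>" using \<delta> by (simp add: le_nat_iff le_floor_iff)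
    moreover have "x \<in> nsums (insert 0 {y \<in> F. y \<le> c}) 1" using gen by (auto intro!: exI[of _ x])
    ultimately show ?thesis using nsums_mono_count[of "insert 0 {y \<in> F. y \<le> c}"] by blast
  qed simp
next
  case (add x y)
  have "0 \<le> x" "0 \<le> y" using sgrp_nonneg[OF F0] add.hyps by blast+
  then have "x + y \<in> nsums (insert 0 {y \<in> F. y \<le> c}) (nat \<lfloor>x / \<delta>\<rfloor> + nat \<lfloor>y / \<delta>\<rfloor>)"
    using add by (intro nsums_add) simp_all
  moreover have "nat \<lfloor>x / \<delta>\<rfloor> + nat \<lfloor>y / \<delta>\<rfloor> \<le> nat \<lfloor>(x + y) / \<delta>\<rfloor>"
    using le_floor_add[of "x / \<delta>" "y / \<delta>"] \<open>0 \<le> x\<close> \<open>0 \<le> y\<close> \<delta>(1)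
    by (simp add: add_divide_distrib nat_add_distrib[symmetric])
  ultimately show ?case using nsums_mono_count[of "insert 0 {y \<in> F. y \<le> c}"] by blast
qed

lemma loc_fin_sgrp:
  assumes F0: "F \<subseteq> {0..}" and lf: "loc_fin F"
  shows "loc_fin (sgrp (+) F)"
  unfolding loc_fin_def
proof
  fix c :: real
  obtain \<delta> where \<delta>: "\<delta> > 0" "\<forall>x\<in>F. 0 < x \<longrightarrow> \<delta> \<le> x" using loc_fin_pos_gap[OF lf] by blast
  define T where "T = insert 0 {x \<in> F. x \<le> c}"
  have "finite T" using lf by (simp add: T_def loc_fin_def)
  have "x \<in> nsums T (nat \<lfloor>c / \<delta>\<rfloor>)" if x: "x \<in> sgrp (+) F" "x \<le> c" for x
  proof -
    have "nat \<lfloor>x / \<delta>\<rfloor> \<le> nat \<lfloor>c / \<delta>\<rfloor>"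
      using x(2) \<delta>(1) by (intro nat_mono floor_mono divide_right_mono) simp_all
    then show ?thesis
      using sgrp_mem_nsums[OF F0 \<delta> x] nsums_mono_count[of T] by (auto simp: T_def)
  qed
  then have "{x \<in> sgrp (+) F. x \<le> c} \<subseteq> nsums T (nat \<lfloor>c / \<delta>\<rfloor>)" by blast
  then show "finite {x \<in> sgrp (+) F. x \<le> c}"
    using finite_nsums_of_finite[OF \<open>finite T\<close>] by (rule finite_subset)
qed



lemma nested_loc_fin_snd_bdd_below:
  assumes "nested_loc_fin A"
  shows "\<exists>L. \<forall>x\<in>A. fst x \<le> c \<longrightarrow> L \<le> fst (snd x)"
proof -
  have A_fst: "loc_fin {g0. \<exists>g1 g2. (g0, g1, g2) \<in> A}"
    and A_snd: "\<And>g0. loc_fin {g1. \<exists>g2. (g0, g1, g2) \<in> A}"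
    using assms unfolding nested_loc_fin_def by blast+
  define B where "B = {g0 \<in> {g0. \<exists>g1 g2. (g0, g1, g2) \<in> A}. g0 \<le> c}"
  have "finite B" using A_fst unfolding B_def loc_fin_def by blast
  then have "loc_fin (\<Union>g0\<in>B. {g1. \<exists>g2. (g0, g1, g2) \<in> A})" using A_snd by (rule loc_fin_UN)
  then obtain L where L: "\<forall>l\<in>(\<Union>g0\<in>B. {g1. \<exists>g2. (g0, g1, g2) \<in> A}). L \<le> l"
    using loc_fin_bdd_below by blast
  have "L \<le> fst (snd x)" if "x \<in> A" "fst x \<le> c" for x
  proof -
    obtain x0 x1 x2 where x: "x = (x0, x1, x2)" using prod_cases3 by blast
    then have "x0 \<in> B" "x1 \<in> {g1. \<exists>g2. (x0, g1, g2) \<in> A}" using that by (auto simp: B_def)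
    then show ?thesis using L x by auto
  qed
  then show ?thesis by blast
qed

lemma nested_loc_fin_translate_fst:
  assumes "nested_loc_fin A"
  shows "nested_loc_fin ((\<lambda>x. x + (a, 0, 0)) ` A)"
  unfolding nested_loc_fin_def
proof (intro conjI allI)
  let ?S = "(\<lambda>x. x + (a, 0, 0)) ` A"
  have l1: "loc_fin {g0. \<exists>g1 g2. (g0, g1, g2) \<in> A}" using assms by (simp add: nested_loc_fin_def)
  have l2: "\<And>g0. loc_fin {g1. \<exists>g2. (g0, g1, g2) \<in> A}" using assms by (simp add: nested_loc_fin_def)
  have l3: "\<And>g0 g1. loc_fin {g2. (g0, g1, g2) \<in> A}" using assms by (simp add: nested_loc_fin_def)
  have mem: "(g0, g1, g2) \<in> ?S \<longleftrightarrow> (g0 - a, g1, g2) \<in> A" for g0 g1 g2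
  proof
    assume "(g0, g1, g2) \<in> ?S"
    then obtain x where "x \<in> A" "(g0, g1, g2) = x + (a, 0, 0)" by blast
    moreover obtain x0 x1 x2 where "x = (x0, x1, x2)" using prod_cases3 by blast
    ultimately show "(g0 - a, g1, g2) \<in> A" by simp
  next
    assume "(g0 - a, g1, g2) \<in> A"
    moreover have "(g0, g1, g2) = (g0 - a, g1, g2) + (a, 0, 0)" by simp
    ultimately show "(g0, g1, g2) \<in> ?S" by blast
  qed
  show "loc_fin {g0. \<exists>g1 g2. (g0, g1, g2) \<in> ?S}"
  proof (rule loc_fin_subset[OF loc_fin_translate[OF l1, of a]])
    show "{g0. \<exists>g1 g2. (g0, g1, g2) \<in> ?S} \<subseteq> (\<lambda>x. x + a) ` {g0. \<exists>g1 g2. (g0, g1, g2) \<in> A}"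
    proof
      fix g0 assume "g0 \<in> {g0. \<exists>g1 g2. (g0, g1, g2) \<in> ?S}"
      then obtain g1 g2 where "(g0, g1, g2) \<in> ?S" by blast
      then have "g0 - a \<in> {g0. \<exists>g1 g2. (g0, g1, g2) \<in> A}" using mem by blast
      moreover have "g0 = (g0 - a) + a" by simp
      ultimately show "g0 \<in> (\<lambda>x. x + a) ` {g0. \<exists>g1 g2. (g0, g1, g2) \<in> A}" by blast
    qed
  qed
  fix g0
  show "loc_fin {g1. \<exists>g2. (g0, g1, g2) \<in> ?S}"
    using l2[of "g0 - a"] mem by simp
  fix g1
  show "loc_fin {g2. (g0, g1, g2) \<in> ?S}"
    using l3[of "g0 - a" g1] mem by simp
qed

lemma finite_nsums_if_weight:
  fixes A :: "mon set" and P :: "mon \<Rightarrow> real"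
  assumes A_fst: "\<And>p. p \<in> A \<Longrightarrow> 0 \<le> fst p"
    and P_ge_1: "\<And>p. p \<in> A \<Longrightarrow> fst p \<le> fst r \<Longrightarrow> 1 \<le> P p"
    and P_add: "\<And>p q. P (p + q) = P p + P q"
  shows "finite {n. r \<in> nsums A n}"
proof -
  have "P 0 = 0" using P_add[of 0 0] by simp
  have count: "real n \<le> P s" if "s \<in> nsums A n" "fst s \<le> fst r" for n s
    using that
  proof (induction n arbitrary: s)
    case 0 then show ?case using \<open>P 0 = 0\<close> by simp
  next
    case (Suc n)
    then obtain p q where s: "s = p + q" "p \<in> A" "q \<in> nsums A n"
      by (simp only: nsums.simps mem_Collect_eq) blast
    have "0 \<le> fst p" "0 \<le> fst q" using A_fst nsums_fst_nonneg[OF A_fst s(3)] s(2) by blast+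
    then have "fst p \<le> fst r" "fst q \<le> fst r" using Suc.prems(2) s(1) by simp_all
    then show ?case using Suc.IH[OF s(3)] P_ge_1[OF s(2)] s(1) P_add by simp
  qed
  have "{n. r \<in> nsums A n} \<subseteq> {..nat \<lceil>P r\<rceil>}"
  proof
    fix n assume "n \<in> {n. r \<in> nsums A n}"
    then have "real n \<le> P r" using count by simp
    then show "n \<in> {..nat \<lceil>P r\<rceil>}" by (simp add: le_nat_iff ceiling_le_iff) linarith
  qed
  then show ?thesis using finite_subset by blast
qed

section \<open>Semigroups generated by admissible exponents\<close>

locale admissible_generators =
  fixes G :: "mon set"
  assumes gen_pos: "y \<in> G \<Longrightarrow> 0 < y"
    and gen_Ints: "y \<in> G \<Longrightarrow> fst (snd y) \<in> \<int> \<and> snd (snd y) \<in> \<int>"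
    and gen_fst_zero: "y \<in> G \<Longrightarrow> fst y = 0 \<Longrightarrow> 0 \<le> fst (snd y) \<and> 0 \<le> fst (snd y) + snd (snd y)"
    and gen_fst_pos: "y \<in> G \<Longrightarrow> 0 < fst y \<Longrightarrow> snd (snd y) = 0"
    and loc_fin_fst: "loc_fin (fst ` G)"
    and gen_ell_bdd_below: "\<exists>L. \<forall>y\<in>G. 0 < fst y \<and> fst y \<le> c \<longrightarrow> L \<le> fst (snd y)"
begin

abbreviation M :: "mon set" where "M \<equiv> sgrp add_mon G"

lemma gen_fst_nonneg: "y \<in> G \<Longrightarrow> 0 \<le> fst y"
  using gen_pos[of y] by (cases y) (auto simp: less_prod_def zero_prod_def)

lemma M_props:
  "x \<in> M \<Longrightarrow> 0 \<le> fst x \<and> fst (snd x) \<in> \<int> \<and> snd (snd x) \<in> \<int> \<and> 0 < x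
     \<and> fst x \<in> sgrp (+) (fst ` G)"
proof (induction rule: sgrp.induct)
  case (gen x)
  then show ?case using gen_fst_nonneg gen_Ints gen_pos by (auto intro: sgrp.gen)
next
  case (add x y)
  then have "0 < x + y" using mon_add_pos_nonneg less_imp_le by blast
  with add show ?case by (auto simp: add_mon_eq_plus intro: sgrp.add)
qed

lemma M0_props:
  "x \<in> insert 0 M \<Longrightarrow> 0 \<le> fst x \<and> fst (snd x) \<in> \<int> \<and> snd (snd x) \<in> \<int>
     \<and> fst x \<in> insert 0 (sgrp (+) (fst ` G))"
  using M_props[of x] by (auto simp: zero_prod_def)

lemma M_fst_gap: "\<exists>\<delta>>0. \<forall>x\<in>M. 0 < fst x \<longrightarrow> \<delta> \<le> fst x"
proof -
  obtain \<delta> where \<delta>: "\<delta> > 0" "\<forall>x\<in>fst ` G. 0 < x \<longrightarrow> \<delta> \<le> x"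
    using loc_fin_pos_gap[OF loc_fin_fst] by blast
  have "x \<in> M \<Longrightarrow> 0 < fst x \<Longrightarrow> \<delta> \<le> fst x" for x
  proof (induction rule: sgrp.induct)
    case (gen x) then show ?case using \<delta> by blast
  next
    case (add x y)
    have "0 \<le> fst x" "0 \<le> fst y" using M_props add.hyps by blast+
    then show ?case using add by (cases "0 < fst x") (auto simp: add_mon_eq_plus)
  qed
  then show ?thesis using \<delta>(1) by blast
qed

text \<open>Below any bound on the first exponent, the \<open>\<ell>\<close>-exponents of \<open>M\<close> decrease at most linearly
  in the first exponent; this is what makes the fibres of \<open>M\<close> finite.\<close>
lemma M0_ell_bound:
  "\<exists>\<kappa>\<ge>0. \<forall>x\<in>insert 0 M. fst x \<le> c \<longrightarrow>
     - \<kappa> * fst x \<le> fst (snd x) \<and> - \<kappa> * fst x \<le> fst (snd x) + snd (snd x)"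
proof -
  obtain \<delta> where \<delta>: "\<delta> > 0" "\<forall>x\<in>fst ` G. 0 < x \<longrightarrow> \<delta> \<le> x"
    using loc_fin_pos_gap[OF loc_fin_fst] by blast
  obtain L where L: "\<forall>y\<in>G. 0 < fst y \<and> fst y \<le> c \<longrightarrow> L \<le> fst (snd y)"
    using gen_ell_bdd_below by blast
  define \<kappa> where "\<kappa> = max 0 (- L) / \<delta>"
  have "\<kappa> \<ge> 0" using \<delta> by (simp add: \<kappa>_def)
  have "x \<in> M \<Longrightarrow> fst x \<le> c \<Longrightarrow>
     - \<kappa> * fst x \<le> fst (snd x) \<and> - \<kappa> * fst x \<le> fst (snd x) + snd (snd x)" for x
  proof (induction rule: sgrp.induct)
    case (gen y)
    show ?case
    proof (cases "fst y = 0")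
      case True then show ?thesis using gen_fst_zero[OF gen.hyps] by simp
    next
      case False
      then have "0 < fst y" using gen_fst_nonneg[OF gen.hyps] by simp
      then have "\<delta> \<le> fst y" using \<delta> gen.hyps by blast
      then have "max 0 (- L) \<le> \<kappa> * fst y"
        using \<delta>(1) \<open>\<kappa> \<ge> 0\<close> mult_left_mono[of \<delta> "fst y" \<kappa>] by (simp add: \<kappa>_def)
      moreover have "L \<le> fst (snd y)" using L gen \<open>0 < fst y\<close> by blast
      ultimately show ?thesis using gen_fst_pos[OF gen.hyps \<open>0 < fst y\<close>] by linarith
    qed
  next
    case (add x y)
    have "0 \<le> fst x" "0 \<le> fst y" using M_props add.hyps by blast+
    then show ?case using add by (simp add: add_mon_eq_plus algebra_simps)
  qed
  then show ?thesis using \<open>\<kappa> \<ge> 0\<close> by (auto simp: zero_prod_def)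
qed

lemma loc_fin_fst_M0: "loc_fin (insert 0 (sgrp (+) (fst ` G)))"
  using gen_fst_nonneg loc_fin_fst by (intro loc_fin_insert loc_fin_sgrp) auto

lemma nested_loc_fin_M0: "nested_loc_fin (insert 0 M)"
  unfolding nested_loc_fin_def
proof (intro conjI allI)
  have "g0 \<in> insert 0 (sgrp (+) (fst ` G))" if "(g0, g1, g2) \<in> insert 0 M" for g0 g1 g2
    using M0_props[OF that] by simp
  then show "loc_fin {g0. \<exists>g1 g2. (g0, g1, g2) \<in> insert 0 M}"
    by (intro loc_fin_subset[OF loc_fin_fst_M0]) blast
  fix g0
  obtain \<kappa> where \<kappa>: "\<forall>x\<in>insert 0 M. fst x \<le> g0 \<longrightarrow>
     - \<kappa> * fst x \<le> fst (snd x) \<and> - \<kappa> * fst x \<le> fst (snd x) + snd (snd x)"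
    using M0_ell_bound by blast
  have bounds: "g1 \<in> \<int> \<and> g2 \<in> \<int> \<and> - \<kappa> * g0 \<le> g1 \<and> - \<kappa> * g0 - g1 \<le> g2"
    if "(g0, g1, g2) \<in> insert 0 M" for g1 g2
    using M0_props[OF that] bspec[OF \<kappa> that] by simp
  show "loc_fin {g1. \<exists>g2. (g0, g1, g2) \<in> insert 0 M}"
    by (rule loc_fin_Ints_bdd_below[of _ "- \<kappa> * g0"]) (use bounds in blast)+
  fix g1
  show "loc_fin {g2. (g0, g1, g2) \<in> insert 0 M}"
    by (rule loc_fin_Ints_bdd_below[of _ "- \<kappa> * g0 - g1"]) (use bounds in blast)+
qed

lemma nsums_M_subset: "nsums M n \<subseteq> insert 0 M"
proof (induction n)
  case 0 then show ?case by simp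
next
  case (Suc n)
  show ?case
  proof
    fix x assume "x \<in> nsums M (Suc n)"
    then obtain p q where "x = p + q" "p \<in> M" "q \<in> insert 0 M"
      using Suc.IH by (simp only: nsums.simps mem_Collect_eq) blast
    moreover have "add_mon p q \<in> M" if "q \<in> M" using sgrp.add[OF \<open>p \<in> M\<close> that] .
    ultimately show "x \<in> insert 0 M" by (auto simp: add_mon_eq_plus)
  qed
qed

lemma finite_splits_M: "finite {(p, q). p \<in> insert 0 M \<and> q \<in> insert 0 M \<and> p + q = r}"
proof -
  obtain \<kappa> where \<kappa>: "\<kappa> \<ge> 0" "\<forall>x\<in>insert 0 M. fst x \<le> fst r \<longrightarrow>
     - \<kappa> * fst x \<le> fst (snd x) \<and> - \<kappa> * fst x \<le> fst (snd x) + snd (snd x)"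
    using M0_ell_bound by blast
  define R where "R = \<kappa> * fst r"
  define F0 where "F0 = {x \<in> insert 0 (sgrp (+) (fst ` G)). x \<le> fst r}"
  define Z1 where "Z1 = {x. x \<in> \<int> \<and> - R \<le> x \<and> x \<le> fst (snd r) + R}"
  define Z2 where "Z2 = {x. x \<in> \<int> \<and> - R - (fst (snd r) + R) \<le> x
                          \<and> x \<le> snd (snd r) + fst (snd r) + R + R}"
  have fin: "finite (F0 \<times> Z1 \<times> Z2)"
    using loc_fin_fst_M0 finite_Ints_between by (simp add: F0_def Z1_def Z2_def loc_fin_def)
  have F0Z: "p \<in> F0 \<times> Z1 \<times> Z2" if pq: "p \<in> insert 0 M" "q \<in> insert 0 M" "p + q = r" for p q
  proof -
    have s: "fst p + fst q = fst r" "fst (snd p) + fst (snd q) = fst (snd r)"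
      "snd (snd p) + snd (snd q) = snd (snd r)" using pq(3) by auto
    have "0 \<le> fst p" "0 \<le> fst q" using M0_props pq(1,2) by blast+
    then have "fst p \<le> fst r" "fst q \<le> fst r" using s(1) by linarith+
    then have "- \<kappa> * fst p \<le> fst (snd p) \<and> - \<kappa> * fst p \<le> fst (snd p) + snd (snd p)"
      "- \<kappa> * fst q \<le> fst (snd q) \<and> - \<kappa> * fst q \<le> fst (snd q) + snd (snd q)"
      "\<kappa> * fst p \<le> R" "\<kappa> * fst q \<le> R"
      using \<kappa> pq(1,2) by (auto simp: R_def mult_left_mono)
    then show ?thesis
      using M0_props[OF pq(1)] \<open>fst p \<le> fst r\<close> s by (simp add: F0_def Z1_def Z2_def mem_Times_iff)
  qed
  have "x \<in> (\<lambda>p. (p, r - p)) ` (F0 \<times> Z1 \<times> Z2)"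
    if "x \<in> {(p, q). p \<in> insert 0 M \<and> q \<in> insert 0 M \<and> p + q = r}" for x
  proof -
    obtain p q where x: "x = (p, q)" by (cases x)
    with that have pq: "p \<in> insert 0 M" "q \<in> insert 0 M" "p + q = r" by simp_all
    then have "q = r - p" by (metis add_diff_cancel_left')
    then show ?thesis using x F0Z[OF pq] by blast
  qed
  then have "{(p, q). p \<in> insert 0 M \<and> q \<in> insert 0 M \<and> p + q = r}
             \<subseteq> (\<lambda>p. (p, r - p)) ` (F0 \<times> Z1 \<times> Z2)" by (rule subsetI)
  then show ?thesis using finite_subset fin by blast
qed

lemma finite_nsums_M: "finite {n. r \<in> nsums M n}"
proof -
  obtain \<delta> where \<delta>: "\<delta> > 0" "\<forall>x\<in>M. 0 < fst x \<longrightarrow> \<delta> \<le> fst x" using M_fst_gap by blast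
  obtain \<kappa> where \<kappa>: "\<forall>x\<in>insert 0 M. fst x \<le> fst r \<longrightarrow>
     - \<kappa> * fst x \<le> fst (snd x) \<and> - \<kappa> * fst x \<le> fst (snd x) + snd (snd x)"
    using M0_ell_bound by blast
  define P where "P = (\<lambda>x::mon. fst x / \<delta> + (fst (snd x) + \<kappa> * fst x)
     + (fst (snd x) + snd (snd x) + \<kappa> * fst x))"
  have "1 \<le> P p" if p: "p \<in> M" "fst p \<le> fst r" for p
  proof -
    have Mp: "0 \<le> fst p" "fst (snd p) \<in> \<int>" "snd (snd p) \<in> \<int>" "0 < p"
      using M_props[OF p(1)] by simp_all
    have lp: "- \<kappa> * fst p \<le> fst (snd p)" "- \<kappa> * fst p \<le> fst (snd p) + snd (snd p)"
      using \<kappa> p by simp_all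
    show ?thesis
    proof (cases "fst p = 0")
      case False
      then have "1 \<le> fst p / \<delta>" using \<delta> p(1) Mp(1) by simp
      then show ?thesis using lp by (simp add: P_def)
    next
      case True
      obtain i j where ij: "fst (snd p) = of_int i" "snd (snd p) = of_int j"
        using Mp(2,3) Ints_cases by metis
      have "0 \<le> i" "0 \<le> i + j" using lp True ij by simp_all
      moreover have "\<not> (i = 0 \<and> j = 0)"
        using Mp(4) True ij by (cases p) (auto simp: zero_prod_def)
      ultimately have "1 \<le> 2 * i + j" by linarith
      then show ?thesis using True ij by (simp add: P_def)
    qed
  qed
  moreover have "P (p + q) = P p + P q" for p q
    by (simp add: P_def algebra_simps add_divide_distrib)
  ultimately show ?thesis using M_props by (intro finite_nsums_if_weight[where P = P]) blast+
qed

lemma well_ordered_M0: "well_ordered_mon (insert 0 M)"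
  by (rule well_ordered_mon_if_nested_loc_fin[OF nested_loc_fin_M0])

lemma exponent_semigroup_M:
  assumes "(0, 1, 0) \<in> M"
  shows "exponent_semigroup M"
proof
  show "0 < x" if "x \<in> M" for x using M_props[OF that] by blast
  show "x + y \<in> M" if "x \<in> M" "y \<in> M" for x y
    using sgrp.add[OF that] by (simp add: add_mon_eq_plus)
  show "well_ordered_mon M" using well_ordered_mon_subset[OF well_ordered_M0] by blast
qed (use assms finite_nsums_M finite_splits_M in auto)

end

lemma admissible_generators_Un:
  assumes "admissible_generators A" "admissible_generators B"
  shows "admissible_generators (A \<union> B)"
proof -
  interpret A: admissible_generators A by fact
  interpret B: admissible_generators B by fact
  show ?thesis
  proof
    show "loc_fin (fst ` (A \<union> B))"
      unfolding image_Un by (rule loc_fin_Un[OF A.loc_fin_fst B.loc_fin_fst])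
    fix c
    obtain L1 L2 where "\<forall>y\<in>A. 0 < fst y \<and> fst y \<le> c \<longrightarrow> L1 \<le> fst (snd y)"
      "\<forall>y\<in>B. 0 < fst y \<and> fst y \<le> c \<longrightarrow> L2 \<le> fst (snd y)"
      using A.gen_ell_bdd_below B.gen_ell_bdd_below by metis
    then have "\<forall>y\<in>A \<union> B. 0 < fst y \<and> fst y \<le> c \<longrightarrow> min L1 L2 \<le> fst (snd y)"
      by (auto intro: min.coboundedI1 min.coboundedI2)
    then show "\<exists>L. \<forall>y\<in>A \<union> B. 0 < fst y \<and> fst y \<le> c \<longrightarrow> L \<le> fst (snd y)" by blast
  qed (use A.gen_pos B.gen_pos A.gen_Ints B.gen_Ints A.gen_fst_zero B.gen_fst_zero
         A.gen_fst_pos B.gen_fst_pos in blast)+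
qed

lemma admissible_generators_fst_zero:
  assumes "\<And>y. y \<in> G \<Longrightarrow> fst y = 0 \<and> 0 < y \<and> fst (snd y) \<in> \<int> \<and> snd (snd y) \<in> \<int>
                          \<and> 0 \<le> fst (snd y) \<and> 0 \<le> fst (snd y) + snd (snd y)"
  shows "admissible_generators G"
proof
  have "fst ` G \<subseteq> {0}" using assms by auto
  then show "loc_fin (fst ` G)"
    by (rule loc_fin_subset[rotated]) (simp add: loc_fin_def finite_subset[of _ "{0}"])
qed (use assms in force)+

section \<open>The exponent semigroup of \<open>g\<close>\<close>

definition quotient_exponents :: "ts \<Rightarrow> real \<Rightarrow> int \<Rightarrow> mon set" where
  "quotient_exponents g \<alpha> m = {(\<beta> - \<alpha>, l - real_of_int m, 0) | \<beta> l.
     (\<beta>, l, 0) \<in> supp g \<and> (\<beta>, l) \<noteq> (\<alpha>, real_of_int m)}"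

definition triple_of_pair :: "real \<times> real \<Rightarrow> mon" where
  "triple_of_pair p = (fst p, snd p, 0)"

definition R_gens :: "ts \<Rightarrow> real \<Rightarrow> int \<Rightarrow> mon set" where
  "R_gens g \<alpha> m = (if m \<noteq> 0 then gens3 g \<alpha> m else triple_of_pair ` gens2 g \<alpha>)"

lemma triple_of_pair_gens2: "triple_of_pair ` gens2 g \<alpha> = quotient_exponents g \<alpha> 0 \<union> {(0, 1, 0)}"
  unfolding gens2_def quotient_exponents_def triple_of_pair_def image_Un by force

lemma R_gens_eq:
  "R_gens g \<alpha> m = quotient_exponents g \<alpha> m
                   \<union> (if m \<noteq> 0 then {(0, 1, -1), (0, 0, 1)} else {(0, 1, 0)})"
  by (simp add: R_gens_def gens3_def quotient_exponents_def triple_of_pair_gens2)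

lemma sgrp_triple_of_pair: "sgrp add_mon (triple_of_pair ` G) = triple_of_pair ` sgrp add2 G"
proof -
  have hom: "add_mon (triple_of_pair x) (triple_of_pair y) = triple_of_pair (add2 x y)" for x y
    by (simp add: add_mon_def triple_of_pair_def add2_def)
  have "x \<in> triple_of_pair ` sgrp add2 G" if "x \<in> sgrp add_mon (triple_of_pair ` G)" for x
    using that
  proof induction
    case (add x y)
    then obtain a b where "x = triple_of_pair a" "y = triple_of_pair b"
      "a \<in> sgrp add2 G" "b \<in> sgrp add2 G" by blast
    then show ?case by (metis hom image_eqI sgrp.add)
  qed (blast intro: sgrp.gen)
  moreover have "triple_of_pair x \<in> sgrp add_mon (triple_of_pair ` G)" if "x \<in> sgrp add2 G" for x
    using that by induction (auto simp: hom[symmetric] intro: sgrp.intros)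
  ultimately show ?thesis by blast
qed

lemma R_set_eq_translate: "R_set g \<alpha> m = (\<lambda>x. x + (1, 0, 0)) ` sgrp add_mon (R_gens g \<alpha> m)"
proof (cases "m = 0")
  case True
  have "R_set g \<alpha> m = (\<lambda>x. x + (1, 0, 0)) ` triple_of_pair ` sgrp add2 (gens2 g \<alpha>)"
    using True by (force simp: R_set_def triple_of_pair_def)
  then show ?thesis using True by (simp add: R_gens_def sgrp_triple_of_pair)
next
  case False
  then show ?thesis by (auto simp: R_set_def R_gens_def add_mon_eq_plus)
qed

lemma ell_mem_sgrp_R_gens: "(0, 1, 0) \<in> sgrp add_mon (R_gens g \<alpha> m)"
proof (cases "m = 0")
  case True
  then show ?thesis by (simp add: R_gens_eq sgrp.gen)
next
  case False
  then have "add_mon (0, 1, -1) (0, 0, 1) \<in> sgrp add_mon (R_gens g \<alpha> m)"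
    by (simp add: R_gens_eq sgrp.intros)
  then show ?thesis by (simp add: add_mon_def)
qed

lemma sgrp_R_gens_third_zero:
  "x \<in> sgrp add_mon (R_gens g \<alpha> m) \<Longrightarrow> m = 0 \<Longrightarrow> snd (snd x) = 0"
  by (induction rule: sgrp.induct) (auto simp: R_gens_def triple_of_pair_def add_mon_def)

lemma admissible_quotient_exponents:
  assumes g: "in_L g" and lead: "\<forall>p\<in>supp g. lexle (\<alpha>, real_of_int m, 0) p"
  shows "admissible_generators (quotient_exponents g \<alpha> m)"
proof -
  have g_Ints: "l \<in> \<int>" if "(\<beta>, l, 0) \<in> supp g" for \<beta> l
    using g that unfolding in_L_def in_L1_def by fastforce
  have g_nested: "nested_loc_fin (supp g)"
    using g unfolding in_L_def in_L1_def in_L2_iff by blast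
  show ?thesis
  proof
    fix y assume "y \<in> quotient_exponents g \<alpha> m"
    then obtain \<beta> l where y: "y = (\<beta> - \<alpha>, l - real_of_int m, 0)" "(\<beta>, l, 0) \<in> supp g"
      "(\<beta>, l) \<noteq> (\<alpha>, real_of_int m)" unfolding quotient_exponents_def by blast
    have "(\<alpha>, real_of_int m, 0) \<le> (\<beta>, l, (0::real))" using lead y(2) lexle_iff_le by blast
    then have "\<alpha> < \<beta> \<or> (\<alpha> = \<beta> \<and> real_of_int m < l)" using y(3) by auto
    moreover have "l - real_of_int m \<in> \<int>" using g_Ints[OF y(2)] by simp
    ultimately show "0 < y" "fst (snd y) \<in> \<int> \<and> snd (snd y) \<in> \<int>"
      "fst y = 0 \<Longrightarrow> 0 \<le> fst (snd y) \<and> 0 \<le> fst (snd y) + snd (snd y)"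
      "0 < fst y \<Longrightarrow> snd (snd y) = 0"
      using y(1) by (auto simp: zero_prod_def)
  next
    show "loc_fin (fst ` quotient_exponents g \<alpha> m)"
      by (rule loc_fin_subset[OF loc_fin_translate[of _ "- \<alpha>"]])
        (use g_nested in \<open>force simp: nested_loc_fin_def quotient_exponents_def\<close>)+
  next
    fix c
    obtain L where L: "\<forall>x\<in>supp g. fst x \<le> c + \<alpha> \<longrightarrow> L \<le> fst (snd x)"
      using nested_loc_fin_snd_bdd_below[OF g_nested] by blast
    have "L - real_of_int m \<le> fst (snd y)"
      if y_mem: "y \<in> quotient_exponents g \<alpha> m" and y_fst: "fst y \<le> c" for y
    proof -
      obtain \<beta> l where y: "y = (\<beta> - \<alpha>, l - real_of_int m, 0)" "(\<beta>, l, 0) \<in> supp g"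
        using y_mem unfolding quotient_exponents_def by blast
      then show ?thesis using bspec[OF L y(2)] y_fst by simp
    qed
    then show "\<exists>L. \<forall>y\<in>quotient_exponents g \<alpha> m. 0 < fst y \<and> fst y \<le> c \<longrightarrow> L \<le> fst (snd y)"
      by blast
  qed
qed

lemma admissible_R_gens:
  assumes "in_L g" "\<forall>p\<in>supp g. lexle (\<alpha>, real_of_int m, 0) p"
  shows "admissible_generators (R_gens g \<alpha> m)"
  unfolding R_gens_eq
  by (intro admissible_generators_Un admissible_quotient_exponents[OF assms]
      admissible_generators_fst_zero) (auto simp: zero_prod_def split: if_splits)

lemma supp_quotient_subset:
  assumes g: "in_L g"
  shows "supp (\<lambda>s. g (s + (\<alpha>, real_of_int m, 0)) / a) \<subseteq> insert 0 (sgrp add_mon (R_gens g \<alpha> m))"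
proof
  fix s assume "s \<in> supp (\<lambda>s. g (s + (\<alpha>, real_of_int m, 0)) / a)"
  then have sg: "s + (\<alpha>, real_of_int m, 0) \<in> supp g" by (simp add: supp_def)
  obtain s0 s1 s2 where s: "s = (s0, s1, s2)" using prod_cases3 by blast
  have "s2 = 0" using g sg s unfolding in_L_def in_L1_def by fastforce
  show "s \<in> insert 0 (sgrp add_mon (R_gens g \<alpha> m))"
  proof (cases "s = 0")
    case False
    then have "(s0 + \<alpha>, s1 + real_of_int m) \<noteq> (\<alpha>, real_of_int m)"
      using s \<open>s2 = 0\<close> by (auto simp: zero_prod_def)
    moreover have "(s0 + \<alpha>, s1 + real_of_int m, 0) \<in> supp g" using sg s \<open>s2 = 0\<close> by simp
    ultimately have "(s0 + \<alpha> - \<alpha>, s1 + real_of_int m - real_of_int m, 0) \<in> quotient_exponents g \<alpha> m"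
      unfolding quotient_exponents_def by blast
    then show ?thesis using s \<open>s2 = 0\<close> by (auto simp: R_gens_eq intro: sgrp.gen)
  qed simp
qed

lemma comp_gam_eq_iff:
  assumes "a \<noteq> 0"
  shows "comp_gam a \<alpha> m \<phi> = g
         \<longleftrightarrow> comp_factor \<alpha> m (ts_eps \<phi>) = (\<lambda>s. g (s + (\<alpha>, real_of_int m, 0)) / a)"
    (is "_ \<longleftrightarrow> ?C = (\<lambda>s. g (s + ?v) / a)")
proof
  have shift: "comp_gam a \<alpha> m \<phi> s = a * ?C (s - ?v)" for s
    by (simp add: comp_gam_eq_comp_factor ts_scale_def ts_mult_ts_mono_1)
  show "?C = (\<lambda>s. g (s + ?v) / a)" if "comp_gam a \<alpha> m \<phi> = g"
  proof
    fix s show "?C s = g (s + ?v) / a" using shift[of "s + ?v"] that assms by simp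
  qed
  show "comp_gam a \<alpha> m \<phi> = g" if "?C = (\<lambda>s. g (s + ?v) / a)"
  proof
    fix s show "comp_gam a \<alpha> m \<phi> s = g s" using shift[of s] that assms by simp
  qed
qed

section \<open>Parabolic series\<close>

definition x_one_plus :: "ts \<Rightarrow> ts" where
  "x_one_plus e = (\<lambda>p. ts_one (p - (1, 0, 0)) + e (p - (1, 0, 0)))"

lemma ts_eps_x_one_plus: "ts_eps (x_one_plus e) = e"
  by (simp add: fun_eq_iff ts_eps_def x_one_plus_def add_mon_eq_plus)

lemma ts_eps_apply: "ts_eps \<phi> p = \<phi> (p + (1, 0, 0)) - ts_one p"
  by (simp add: ts_eps_def add_mon_eq_plus)

lemma
  assumes "parabolic \<phi>"
  shows infinitesimal_ts_eps: "infinitesimal (ts_eps \<phi>)"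
    and supp_ts_minus_x: "supp (ts_minus \<phi> (ts_mono 1 (1, 0, 0))) = (\<lambda>x. x + (1, 0, 0)) ` supp (ts_eps \<phi>)"
    and supp_parabolic: "supp \<phi> \<subseteq> (\<lambda>x. x + (1, 0, 0)) ` insert 0 (supp (ts_eps \<phi>))"
proof -
  let ?w = "(1, 0, 0) :: mon"
  have w: "\<phi> ?w = 1" "\<And>p. p \<in> supp \<phi> \<Longrightarrow> ?w \<le> p"
    using assms by (auto simp: parabolic_def lexle_iff_le)
  have eps: "ts_eps \<phi> p = (if p = 0 then 0 else \<phi> (p + ?w))" for p
    using w(1) by (simp add: ts_eps_apply ts_one_apply)
  have "0 < p" if "p \<in> supp (ts_eps \<phi>)" for p
  proof -
    have "p \<noteq> 0" "p + ?w \<in> supp \<phi>" using that by (auto simp: supp_def eps split: if_splits)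
    then have "?w \<le> p + ?w" using w(2) by blast
    then have "?w + - ?w \<le> p + ?w + - ?w" by (rule mon_add_right_mono)
    then have "0 \<le> p" by (simp only: add.assoc add.right_inverse add_0_right)
    then show ?thesis using \<open>p \<noteq> 0\<close> by simp
  qed
  then show "infinitesimal (ts_eps \<phi>)" by (simp add: infinitesimal_def)
  have minus: "p \<in> supp (ts_minus \<phi> (ts_mono 1 ?w)) \<longleftrightarrow> p - ?w \<in> supp (ts_eps \<phi>)" for p
    using w(1) by (auto simp: supp_def ts_minus_def ts_mono_def eps)
  show "supp (ts_minus \<phi> (ts_mono 1 ?w)) = (\<lambda>x. x + ?w) ` supp (ts_eps \<phi>)"
  proof (intro set_eqI iffI)
    fix p assume "p \<in> supp (ts_minus \<phi> (ts_mono 1 ?w))"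
    then show "p \<in> (\<lambda>x. x + ?w) ` supp (ts_eps \<phi>)"
      using minus by (intro rev_image_eqI[of "p - ?w"]) simp_all
  next
    fix p assume "p \<in> (\<lambda>x. x + ?w) ` supp (ts_eps \<phi>)"
    then show "p \<in> supp (ts_minus \<phi> (ts_mono 1 ?w))" using minus by auto
  qed
  show "supp \<phi> \<subseteq> (\<lambda>x. x + ?w) ` insert 0 (supp (ts_eps \<phi>))"
  proof
    fix p assume "p \<in> supp \<phi>"
    then have "p - ?w \<in> insert 0 (supp (ts_eps \<phi>))" by (auto simp: supp_def eps)
    then show "p \<in> (\<lambda>x. x + ?w) ` insert 0 (supp (ts_eps \<phi>))" by (rule rev_image_eqI) simp
  qed
qed

lemma well_ordered_supp_ts_eps:
  assumes "parabolic \<phi>"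
  shows "well_ordered_mon (supp (ts_eps \<phi>))"
proof -
  have "p \<in> (\<lambda>x. x + - (1, 0, 0)) ` supp \<phi>" if "p \<in> supp (ts_eps \<phi>)" for p
  proof -
    have "p \<noteq> 0" using that infinitesimal_ts_eps[OF assms] by (auto simp: infinitesimal_def)
    then have "p + (1, 0, 0) \<in> supp \<phi>" using that by (simp add: supp_def ts_eps_apply ts_one_apply)
    moreover have "p = p + (1, 0, 0) + - (1, 0, 0)"
      by (simp only: add.assoc add.right_inverse add_0_right)
    ultimately show ?thesis by (rule rev_image_eqI)
  qed
  moreover have "well_ordered_mon (supp \<phi>)" using assms by (simp add: parabolic_def hahn_def)
  ultimately show ?thesis
    using well_ordered_mon_subset[OF well_ordered_mon_translate] subsetI by metis
qed

lemma parabolic_x_one_plus: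
  assumes e: "infinitesimal e" "well_ordered_mon (insert 0 (supp e))"
  shows "parabolic (x_one_plus e)"
  unfolding parabolic_def hahn_def
proof (intro conjI ballI)
  let ?w = "(1, 0, 0) :: mon"
  have "0 \<notin> supp e" using e(1) by (auto simp: infinitesimal_def)
  then show "x_one_plus e ?w = 1" by (simp add: x_one_plus_def ts_one_apply supp_def)
  have supp: "supp (x_one_plus e) \<subseteq> (\<lambda>x. x + ?w) ` insert 0 (supp e)"
  proof
    fix p assume "p \<in> supp (x_one_plus e)"
    then have "p - ?w \<in> insert 0 (supp e)"
      by (cases "p - ?w = 0") (auto simp: supp_def x_one_plus_def ts_one_apply)
    then show "p \<in> (\<lambda>x. x + ?w) ` insert 0 (supp e)" by (rule rev_image_eqI) simp
  qed
  then show "well_ordered_mon (supp (x_one_plus e))"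
    using well_ordered_mon_subset[OF well_ordered_mon_translate[OF e(2)]] by blast
  fix p assume "p \<in> supp (x_one_plus e)"
  then obtain x where "x \<in> insert 0 (supp e)" "p = x + ?w" using supp by blast
  moreover have "0 \<le> x" if "x \<in> insert 0 (supp e)" for x
    using that e(1) by (auto simp: infinitesimal_def less_imp_le)
  ultimately show "lexle ?w p" using mon_le_add[of x ?w] by (simp add: lexle_iff_le add.commute)
qed

context admissible_generators
begin

lemma
  assumes "parabolic \<phi>" "supp (ts_eps \<phi>) \<subseteq> M"
  shows in_L2_if_eps_in_M: "in_L2 \<phi>"
    and in_L_if_eps_in_M: "(\<And>x. x \<in> M \<Longrightarrow> snd (snd x) = 0) \<Longrightarrow> in_L \<phi>"
proof -
  have supp: "supp \<phi> \<subseteq> (\<lambda>x. x + (1, 0, 0)) ` insert 0 M"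
    using supp_parabolic[OF assms(1)] assms(2) by blast
  have "0 < fst p \<and> fst (snd p) \<in> \<int>" if "p \<in> supp \<phi>" for p
    using that supp M0_props by fastforce
  moreover have "nested_loc_fin (supp \<phi>)"
    using nested_loc_fin_subset[OF nested_loc_fin_translate_fst[OF nested_loc_fin_M0] supp] .
  ultimately show "in_L2 \<phi>" by (simp add: in_L2_iff)
  moreover assume "\<And>x. x \<in> M \<Longrightarrow> snd (snd x) = 0"
  then have "snd (snd p) = 0" if "p \<in> supp \<phi>" for p
    using that supp by (fastforce simp: zero_prod_def)
  ultimately show "in_L \<phi>" using \<open>\<And>p. p \<in> supp \<phi> \<Longrightarrow> 0 < fst p \<and> fst (snd p) \<in> \<int>\<close>
    by (simp add: in_L_def in_L1_def)
qed

end

theorem lemma5p3: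
  fixes g :: ts and a \<alpha> :: real and m :: int
  assumes "in_L g"
    and "g (\<alpha>, real_of_int m, 0) = a"
    and "\<forall>p \<in> supp g. lexle (\<alpha>, real_of_int m, 0) p"
    and "a > 0" and "\<alpha> > 0"
  shows "(\<exists>\<phi>. parabolic \<phi> \<and> comp_gam a \<alpha> m \<phi> = g) \<and>
         (\<forall>\<phi>. parabolic \<phi> \<and> comp_gam a \<alpha> m \<phi> = g \<longrightarrow>
              in_L2 \<phi> \<and> (m = 0 \<longrightarrow> in_L \<phi>) \<and>
              supp (ts_minus \<phi> (ts_mono 1 (1, 0, 0))) \<subseteq> R_set g \<alpha> m)"
proof -
  define h where "h = (\<lambda>s. g (s + (\<alpha>, real_of_int m, 0)) / a)"
  interpret G: admissible_generators "R_gens g \<alpha> m"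
    using admissible_R_gens assms(1,3) .
  interpret M: exponent_semigroup G.M
    using G.exponent_semigroup_M[OF ell_mem_sgrp_R_gens] .
  have h: "supp h \<subseteq> insert 0 G.M" "h 0 = 1"
    using supp_quotient_subset[OF assms(1)] assms(2,4) by (simp_all add: h_def)
  have eq: "comp_gam a \<alpha> m \<phi> = g \<longleftrightarrow> comp_factor \<alpha> m (ts_eps \<phi>) = h" for \<phi>
    using comp_gam_eq_iff assms(4) by (simp add: h_def)
  obtain E where E: "supp E \<subseteq> G.M" "comp_factor \<alpha> m E = h"
    using M.solution_exists[OF h, of \<alpha> m] assms(5) by auto
  have "well_ordered_mon (insert 0 (supp E))"
    using well_ordered_mon_subset[OF G.well_ordered_M0] E(1) by blast
  then have "parabolic (x_one_plus E) \<and> comp_gam a \<alpha> m (x_one_plus E) = g"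
    using parabolic_x_one_plus M.infinitesimal_if_supp_subset[OF E(1)] eq E(2)
    by (simp add: ts_eps_x_one_plus)
  moreover have "in_L2 \<phi> \<and> (m = 0 \<longrightarrow> in_L \<phi>) \<and>
                 supp (ts_minus \<phi> (ts_mono 1 (1, 0, 0))) \<subseteq> R_set g \<alpha> m"
    if "parabolic \<phi>" "comp_gam a \<alpha> m \<phi> = g" for \<phi>
  proof -
    have "supp (ts_eps \<phi>) \<subseteq> G.M"
      using M.solution_supp_subset[OF h(1) infinitesimal_ts_eps well_ordered_supp_ts_eps]
        that eq assms(5) by simp
    then show ?thesis
      using G.in_L2_if_eps_in_M G.in_L_if_eps_in_M sgrp_R_gens_third_zero
        supp_ts_minus_x R_set_eq_translate that(1) by (metis image_mono)
  qed
  ultimately show ?thesis by blast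
qed

end
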